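(* Let $\mathrm{R}$ be a real closed field, $P,Q,R,S\in\mathrm{R}[X]$ with $P,Q$ not both $0$ and $R,S$ not both $0$, and $a,b\in\mathrm{R}$ with $a<b$. If neither $a$ nor $b$ is a bad number for $P,Q,R,S$, then $$\mathrm{Ind}_a^b(PR-QS,\,PS+QR)=\mathrm{Ind}_a^b(P,Q)+\mathrm{Ind}_a^b(R,S)-\mathrm{Var}_a^b(PS+QR,\,QS).$$
   Context: For nonzero $P\in\mathrm{R}[X]$ and $x\in\mathrm{R}$ write uniquely $P=(X-x)^{\mathrm{mult}_x(P)}P_x$ with $P_x(x)\neq0$. For $P\ne0$, $Q\neq0$ set $\mathrm{val}_x(P/Q)=\mathrm{mult}_x(P)-\mathrm{mult}_x(Q)$, and $\mathrm{val}_x(0/Q)=+\infty$. $\mathrm{Sign}(P,Q,x)=\mathrm{sign}(P_x(x)Q_x(x))$ if $P\ne0$, $Q\ne0$ and $\mathrm{val}_x(P/Q)=0$, and $0$ otherwise. $\mathrm{Var}_a^b(P,Q)=-\tfrac12\mathrm{Sign}(P,Q,a)+\tfrac12\mathrm{Sign}(P,Q,b)$. $\mathrm{Ind}^+_x(P,Q)=\tfrac12\,\mathrm{sign}(P_x(x)Q_x(x))$ and $\mathrm{Ind}^-_x(P,Q)=\tfrac12(-1)^{\mathrm{val}_x(P/Q)}\mathrm{sign}(P_x(x)Q_x(x))$ if $P\ne0$, $Q\neq0$ and $\mathrm{val}_x(P/Q)<0$, both $0$ otherwise; $\mathrm{Ind}_x=\mathrm{Ind}^+_x-\mathrm{Ind}^-_x$;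 for $a<b$, $\mathrm{Ind}_a^b(P,Q)=\mathrm{Ind}_a^+(P,Q)+\sum_{x\in(a,b)}\mathrm{Ind}_x(P,Q)-\mathrm{Ind}_b^-(P,Q)$. A number $c\in\mathrm{R}$ is a bad number for $P,Q,R,S$ if $Q\ne0$, $S\neq0$, $\mathrm{val}_c(P/Q)=\mathrm{val}_c(R/S)<0$ and $\mathrm{val}_c((PS+QR)/(QS))=0$. *)

theory Defs
  imports "HOL-Computational_Algebra.Polynomial"
begin

class real_closed_field = linordered_field +
  assumes rcf_sqrt: "0 \<le> x \<Longrightarrow> \<exists>y. y * y = x"
  assumes rcf_odd_root: "odd n \<Longrightarrow> c n \<noteq> 0 \<Longrightarrow> \<exists>x. (\<Sum>i\<le>n. c i * x ^ i) = 0"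

text \<open>mult_x(P) is \<open>order x P\<close>; P_x is the cofactor of (X-x)^mult.\<close>
definition cof :: "'a::field poly \<Rightarrow> 'a \<Rightarrow> 'a poly" where
  "cof P x = P div [:-x, 1:] ^ order x P"

definition val :: "'a::field poly \<Rightarrow> 'a poly \<Rightarrow> 'a \<Rightarrow> int" where
  "val P Q x = int (order x P) - int (order x Q)"

definition Sign :: "'a::linordered_field poly \<Rightarrow> 'a poly \<Rightarrow> 'a \<Rightarrow> 'a" where
  "Sign P Q x = (if P \<noteq> 0 \<and> Q \<noteq> 0 \<and> val P Q x = 0
     then sgn (poly (cof P x) x * poly (cof Q x) x) else 0)"

definition Var :: "'a::linordered_field poly \<Rightarrow> 'a poly \<Rightarrow> 'a \<Rightarrow> 'a \<Rightarrow> 'a" where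
  "Var P Q a b = - Sign P Q a / 2 + Sign P Q b / 2"

definition Ind_plus :: "'a::linordered_field poly \<Rightarrow> 'a poly \<Rightarrow> 'a \<Rightarrow> 'a" where
  "Ind_plus P Q x = (if P \<noteq> 0 \<and> Q \<noteq> 0 \<and> val P Q x < 0
     then sgn (poly (cof P x) x * poly (cof Q x) x) / 2 else 0)"

definition Ind_minus :: "'a::linordered_field poly \<Rightarrow> 'a poly \<Rightarrow> 'a \<Rightarrow> 'a" where
  "Ind_minus P Q x = (if P \<noteq> 0 \<and> Q \<noteq> 0 \<and> val P Q x < 0
     then (-1) powi (val P Q x) * sgn (poly (cof P x) x * poly (cof Q x) x) / 2 else 0)"

definition Ind_at :: "'a::linordered_field poly \<Rightarrow> 'a poly \<Rightarrow> 'a \<Rightarrow> 'a" where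
  "Ind_at P Q x = Ind_plus P Q x - Ind_minus P Q x"

text \<open>Ind_a^b; the sum over (a,b) has finite support (points with Ind_x \<noteq> 0 are roots of Q).\<close>
definition Ind :: "'a::linordered_field poly \<Rightarrow> 'a poly \<Rightarrow> 'a \<Rightarrow> 'a \<Rightarrow> 'a" where
  "Ind P Q a b = Ind_plus P Q a
     + (\<Sum>x\<in>{x. a < x \<and> x < b \<and> Ind_at P Q x \<noteq> 0}. Ind_at P Q x)
     - Ind_minus P Q b"

text \<open>c is a bad number for P,Q,R,S. Since val = +\<infinity> when the numerator is 0,
 the conditions val < 0 and val = 0 force the numerators to be nonzero.\<close>
definition bad_number :: "'a::linordered_field poly \<Rightarrow> 'a poly \<Rightarrow> 'a poly \<Rightarrow> 'a poly \<Rightarrow> 'a \<Rightarrow> bool" where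
  "bad_number P Q R S c \<longleftrightarrow> Q \<noteq> 0 \<and> S \<noteq> 0 \<and> P \<noteq> 0 \<and> R \<noteq> 0
     \<and> val P Q c = val R S c \<and> val P Q c < 0
     \<and> P * S + Q * R \<noteq> 0 \<and> val (P * S + Q * R) (Q * S) c = 0"

end

theory Submission
  imports Defs "HOL-Algebra.Algebraic_Closure_Type"
begin

text \<open>Write \<open>A + iB = (P + iQ)(R + iS)\<close> and \<open>D = QS\<close>, so that \<open>B/D = P/Q + R/S\<close>.
  At a point \<open>x\<close> the one-sided Cauchy indices depend only on the orders at \<open>x\<close> of the
  polynomials involved and on their signs immediately to the right, resp. left, of \<open>x\<close>.
  A case analysis on the orders of \<open>P/Q\<close> and \<open>R/S\<close> gives, on either side of any \<open>x\<close> that is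
  not a bad number,
  \<open>Ind\<^sup>\<plusminus>\<^sub>x(A, B) = Ind\<^sup>\<plusminus>\<^sub>x(P, Q) + Ind\<^sup>\<plusminus>\<^sub>x(R, S) + (Sign(B, D, x) - \<sigma>\<^sup>\<plusminus>\<^sub>x(BD)) / 2\<close>,
  where \<open>\<sigma>\<^sup>\<plusminus>\<^sub>x(BD)\<close> is the sign of \<open>BD\<close> just right, resp. left, of \<open>x\<close>; the bad numbers are
  exactly the points where the case of equal negative valuations fails. At interior points only
  the difference of the two identities enters, and it also holds at bad numbers. Summed over
  \<open>(a, b)\<close>, the jumps of \<open>\<sigma>(BD)\<close> telescope, since \<open>BD\<close> has constant sign between consecutive
  roots, and what remains at \<open>a\<close> and \<open>b\<close> is \<open>Var\<^sub>a\<^sup>b(B, D)\<close>.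

  The constant sign between roots is the intermediate value property, which over a real closed
  field \<open>R\<close> follows from Laplace's proof that every polynomial over \<open>R\<close> has a root in \<open>R(i)\<close>,
  carried out inside the algebraic closure of \<open>R\<close>.\<close>

hide_const (open) Coset.order Polynomials.degree Polynomials.lead_coeff up_ring.coeff module.smult

section \<open>Roots in \<open>R(i)\<close> and the intermediate value theorem\<close>

lemma map_poly_to_ac_add [simp]:
  "map_poly to_ac (p + q) = map_poly to_ac p + map_poly to_ac (q :: 'a::field poly)"
  by (rule poly_eqI) (simp add: coeff_map_poly)

lemma map_poly_to_ac_diff [simp]:
  "map_poly to_ac (p - q) = map_poly to_ac p - map_poly to_ac (q :: 'a::field poly)"
  by (rule poly_eqI) (simp add: coeff_map_poly)

lemma map_poly_to_ac_smult:
  "map_poly to_ac (smult c p) = smult (to_ac c) (map_poly to_ac (p :: 'a::field poly))"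
  by (rule poly_eqI) (simp add: coeff_map_poly)

lemma map_poly_to_ac_mult [simp]:
  "map_poly to_ac (p * q) = map_poly to_ac p * map_poly to_ac (q :: 'a::field poly)"
  by (rule poly_eqI) (simp add: coeff_map_poly coeff_mult to_ac_sum)

lemma poly_map_poly_to_ac [simp]:
  "poly (map_poly to_ac p) (to_ac x) = to_ac (poly (p :: 'a::field poly) x)"
  by (induction p) (auto simp: map_poly_pCons)

lemma degree_map_poly_to_ac [simp]:
  "degree (map_poly to_ac p) = degree (p :: 'a::field poly)"
  by (rule degree_map_poly) simp

lemma lead_coeff_map_poly_to_ac [simp]:
  "lead_coeff (map_poly to_ac p) = to_ac (lead_coeff (p :: 'a::field poly))"
  by (simp add: coeff_map_poly)

lemma map_poly_to_ac_eq_0_iff [simp]: "map_poly to_ac p = 0 \<longleftrightarrow> (p :: 'a::field poly) = 0"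
  by (simp add: map_poly_eq_0_iff)

lemma range_to_ac_divide:
  "a \<in> range to_ac \<Longrightarrow> b \<in> range to_ac \<Longrightarrow> a / b \<in> range (to_ac :: 'a::field \<Rightarrow> _)"
  by (elim rangeE) (simp flip: to_ac_divide)

lemma range_to_ac_diff:
  "a \<in> range to_ac \<Longrightarrow> b \<in> range to_ac \<Longrightarrow> a - b \<in> range (to_ac :: 'a::field \<Rightarrow> _)"
  by (elim rangeE) (simp flip: to_ac_diff)

lemma rcf_nonneg_sqrt:
  fixes x :: "'a::real_closed_field"
  assumes "0 \<le> x"
  obtains y where "0 \<le> y" "y * y = x"
proof -
  obtain y where "y * y = x" using rcf_sqrt[OF assms] by blast
  then show ?thesis using that[of "\<bar>y\<bar>"] by (simp add: abs_mult_self_eq)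
qed

lemma rcf_complex_sqrt:
  fixes a b :: "'a::real_closed_field"
  obtains u v where "u * u - v * v = a" "2 * (u * v) = b"
proof -
  have "0 \<le> a * a + b * b" by simp
  then obtain \<rho> where \<rho>: "0 \<le> \<rho>" "\<rho> * \<rho> = a * a + b * b" by (rule rcf_nonneg_sqrt)
  have "\<bar>a\<bar>\<^sup>2 \<le> \<rho>\<^sup>2" using \<rho>(2) by (simp add: power2_eq_square)
  then have "\<bar>a\<bar> \<le> \<rho>" using \<rho>(1) by (rule power2_le_imp_le)
  then have "0 \<le> (\<rho> + a) / 2" "0 \<le> (\<rho> - a) / 2" by auto
  then obtain u v' where u: "0 \<le> u" "u * u = (\<rho> + a) / 2" and v': "0 \<le> v'" "v' * v' = (\<rho> - a) / 2"
    by (metis rcf_nonneg_sqrt)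
  have "(u * v')\<^sup>2 = (u * u) * (v' * v')" by (simp add: power2_eq_square mult_ac)
  also have "\<dots> = (\<rho> * \<rho> - a * a) / 4" unfolding u(2) v'(2) by (simp add: field_simps)
  also have "\<dots> = (\<bar>b\<bar> / 2)\<^sup>2" unfolding \<rho>(2) by (simp add: power2_eq_square)
  finally have uv': "u * v' = \<bar>b\<bar> / 2"
    using u(1) v'(1) by (simp add: power2_eq_iff_nonneg)
  define v where "v = (if b \<ge> 0 then v' else - v')"
  have "u * u - v * v = a" using u(2) v'(2) by (simp add: v_def field_simps)
  moreover have "2 * (u * v) = b" using uv' by (auto simp: v_def)
  ultimately show ?thesis by (rule that)
qed

lemma odd_degree_poly_has_root:
  fixes p :: "'a::real_closed_field poly"
  assumes "odd (degree p)"
  obtains x where "poly p x = 0"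
proof -
  have "lead_coeff p \<noteq> 0" using assms by auto
  then obtain x where "(\<Sum>i\<le>degree p. coeff p i * x ^ i) = 0"
    using rcf_odd_root[OF assms] by blast
  then show ?thesis using that by (simp add: poly_altdef)
qed

definition i_ac :: "'a::field alg_closure" where
  "i_ac = (SOME z. z * z = -1)"

lemma i_ac_squared: "i_ac * i_ac = (-1 :: 'a::field alg_closure)"
proof -
  obtain y :: "'a alg_closure" where "y ^ 2 = -1" using nth_root_exists[of 2 "-1"] by auto
  then have "y * y = -1" by (simp add: power2_eq_square)
  then show ?thesis unfolding i_ac_def by (rule someI)
qed

lemma i_ac_neq_0: "i_ac \<noteq> (0 :: 'a::field alg_closure)"
  using i_ac_squared[where 'a='a] by auto

lemma i_ac_not_real: "i_ac \<noteq> to_ac (c :: 'a::real_closed_field)"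
proof
  assume "i_ac = to_ac c"
  then have "to_ac (c * c) = to_ac (-1)" using i_ac_squared[where 'a='a] by simp
  then have "c * c = -1" by (simp only: to_ac_eq_iff)
  moreover have "c * c \<ge> 0" by simp
  ultimately show False by simp
qed

lemma real_plus_i_ac_times_real_eq_real:
  assumes "to_ac a + i_ac * to_ac b = to_ac (c :: 'a::real_closed_field)"
  shows "b = 0" "a = c"
proof -
  show "b = 0"
  proof (rule ccontr)
    assume "b \<noteq> 0"
    have "i_ac * to_ac b = to_ac (c - a)" using assms by (simp add: algebra_simps)
    then have "i_ac = to_ac ((c - a) / b)" using \<open>b \<noteq> 0\<close> by (simp add: field_simps)
    then show False using i_ac_not_real by blast
  qed
  then show "a = c" using assms by simp
qed

text \<open>Below, an element or a
  polynomial over the closure is called real if it lies in the image of \<open>to_ac\<close>, resp.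
  of \<open>map_poly to_ac\<close>.\<close>

definition R_i :: "'a::field alg_closure set" where
  "R_i = {to_ac a + i_ac * to_ac b | a b. True}"

lemma R_iI: "to_ac a + i_ac * to_ac b \<in> R_i"
  unfolding R_i_def by blast

lemma R_iE:
  assumes "z \<in> R_i"
  obtains a b where "z = to_ac a + i_ac * to_ac b"
  using assms unfolding R_i_def by blast

lemma to_ac_in_R_i: "to_ac a \<in> R_i"
  using R_iI[of a 0] by simp

lemma R_i_add:
  assumes "z \<in> R_i" "w \<in> R_i"
  shows "z + w \<in> R_i"
proof -
  obtain a b c d where "z = to_ac a + i_ac * to_ac b" "w = to_ac c + i_ac * to_ac d"
    using assms by (metis R_iE)
  then have "z + w = to_ac (a + c) + i_ac * to_ac (b + d)" by (simp add: algebra_simps)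
  then show ?thesis by (simp only: R_iI)
qed

lemma R_i_diff:
  assumes "z \<in> R_i" "w \<in> R_i"
  shows "z - w \<in> R_i"
proof -
  obtain a b c d where "z = to_ac a + i_ac * to_ac b" "w = to_ac c + i_ac * to_ac d"
    using assms by (metis R_iE)
  then have "z - w = to_ac (a - c) + i_ac * to_ac (b - d)" by (simp add: algebra_simps)
  then show ?thesis by (simp only: R_iI)
qed

lemma R_i_mult:
  assumes "z \<in> R_i" "w \<in> R_i"
  shows "z * w \<in> R_i"
proof -
  obtain a b c d where zw: "z = to_ac a + i_ac * to_ac b" "w = to_ac c + i_ac * to_ac d"
    using assms by (metis R_iE)
  have "z * w = to_ac a * to_ac c + (i_ac * i_ac) * (to_ac b * to_ac d)
      + i_ac * (to_ac a * to_ac d + to_ac b * to_ac c)"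
    unfolding zw by (simp add: algebra_simps)
  also have "\<dots> = to_ac (a * c - b * d) + i_ac * to_ac (a * d + b * c)"
    by (simp add: i_ac_squared)
  finally show ?thesis using R_iI by metis
qed

lemma R_i_scale: "z \<in> R_i \<Longrightarrow> to_ac c * z \<in> R_i"
  using R_i_mult to_ac_in_R_i by blast

lemma R_i_sqrt:
  assumes "z \<in> (R_i :: 'a::real_closed_field alg_closure set)"
  obtains w where "w \<in> R_i" "w * w = z"
proof -
  obtain a b where z: "z = to_ac a + i_ac * to_ac b" using assms by (metis R_iE)
  obtain u v where uv: "u * u - v * v = a" "2 * (u * v) = b" by (rule rcf_complex_sqrt)
  have "(to_ac u + i_ac * to_ac v) * (to_ac u + i_ac * to_ac v)
      = to_ac u * to_ac u + (i_ac * i_ac) * (to_ac v * to_ac v) + i_ac * (2 * (to_ac u * to_ac v))"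
    by (simp add: algebra_simps)
  also have "\<dots> = to_ac (u * u - v * v) + i_ac * to_ac (2 * (u * v))"
    by (simp add: i_ac_squared)
  also have "\<dots> = z"
    using uv z by simp
  finally show ?thesis using that R_iI by blast
qed

lemma R_i_quadratic_root:
  fixes x :: "'a::real_closed_field alg_closure"
  assumes "s \<in> R_i" "t \<in> R_i" "x * x - s * x + t = 0"
  shows "x \<in> R_i"
proof -
  have "s * s - 4 * t \<in> R_i"
    using assms R_i_scale[of t 4] by (simp add: R_i_diff R_i_mult)
  then obtain w where w: "w \<in> R_i" "w * w = s * s - 4 * t" by (rule R_i_sqrt)
  have "(x - (s + w) / 2) * (x - (s - w) / 2) = x * x - s * x + t"
    using w(2) by (simp add: field_simps)
  then have "x = (s + w) / 2 \<or> x = (s - w) / 2" using assms(3) by simp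
  moreover have "(s + w) / 2 \<in> R_i" "(s - w) / 2 \<in> R_i"
    using R_i_scale[OF R_i_add[OF assms(1) w(1)], of "1/2"]
      R_i_scale[OF R_i_diff[OF assms(1) w(1)], of "1/2"] by simp_all
  ultimately show ?thesis by blast
qed

lemma R_i_if_sum_prod:
  fixes x :: "'a::real_closed_field alg_closure"
  assumes "x + y \<in> R_i" "x * y \<in> R_i"
  shows "x \<in> R_i"
proof (rule R_i_quadratic_root[OF assms])
  show "x * x - (x + y) * x + x * y = 0" by (simp add: algebra_simps)
qed

lemma square_eq_real_cases:
  fixes z :: "'a::real_closed_field alg_closure"
  assumes "z * z = to_ac a"
  obtains t where "z = to_ac t" | t where "z = i_ac * to_ac t"
proof (cases "a \<ge> 0")
  case True
  then obtain s where "s * s = a" by (metis rcf_nonneg_sqrt)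
  then have "(z - to_ac s) * (z + to_ac s) = 0"
    using assms by (simp add: algebra_simps flip: to_ac_mult)
  then have "z = to_ac s \<or> z = to_ac (- s)" by (auto simp: eq_neg_iff_add_eq_0)
  then show ?thesis using that by blast
next
  case False
  then obtain s where s: "s * s = - a" by (metis neg_0_le_iff_le nle_le rcf_nonneg_sqrt)
  have "(z - i_ac * to_ac s) * (z + i_ac * to_ac s) = z * z - (i_ac * i_ac) * (to_ac s * to_ac s)"
    by (simp add: algebra_simps)
  also have "\<dots> = 0" using assms s by (simp add: i_ac_squared flip: to_ac_mult)
  finally have "z = i_ac * to_ac s \<or> z = i_ac * to_ac (- s)" by (auto simp: eq_neg_iff_add_eq_0)
  then show ?thesis using that by blast
qed

lemma real_poly_if_real_values:
  fixes P :: "'a::field alg_closure poly"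
  assumes "infinite S" "\<And>x. x \<in> S \<Longrightarrow> poly P (to_ac x) \<in> range to_ac"
  shows "\<exists>P'. P = map_poly to_ac P'"
  using assms
proof (induction "degree P" arbitrary: P S)
  case 0
  then obtain c where c: "P = [:c:]" by (metis degree_eq_zeroE)
  obtain x0 where "x0 \<in> S" using \<open>infinite S\<close> by (metis finite.emptyI ex_in_conv)
  with 0 c obtain d where "c = to_ac d" by auto
  then have "P = map_poly to_ac [:d:]" using c by (simp add: map_poly_pCons)
  then show ?case by blast
next
  case (Suc n)
  obtain x0 where x0: "x0 \<in> S" using \<open>infinite S\<close> by (metis finite.emptyI ex_in_conv)
  obtain d where d: "poly P (to_ac x0) = to_ac d" using Suc.prems(2)[OF x0] by blast
  define P1 where "P1 = synthetic_div P (to_ac x0)"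
  have P: "P = [:-to_ac x0, 1:] * P1 + [:to_ac d:]"
    using synthetic_div_correct'[of "to_ac x0" P] d unfolding P1_def by simp
  have "poly P1 (to_ac x) \<in> range to_ac" if x: "x \<in> S - {x0}" for x
  proof -
    have "poly P1 (to_ac x) = (poly P (to_ac x) - to_ac d) / (to_ac x - to_ac x0)"
      using x by (subst P) (simp add: field_simps)
    then show ?thesis
      using x Suc.prems(2) by (auto intro!: range_to_ac_divide range_to_ac_diff)
  qed
  moreover have "n = degree P1" using Suc(2) unfolding P1_def by (simp add: degree_synthetic_div)
  ultimately obtain P1' where "P1 = map_poly to_ac P1'"
    using Suc(1) \<open>infinite S\<close> by (metis infinite_remove)
  then have "P = map_poly to_ac ([:-x0, 1:] * P1' + [:d:])"
    by (subst P) (simp add: map_poly_pCons map_poly_to_ac_smult)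
  then show ?case by blast
qed

text \<open>Infinitely many of the values are real or infinitely many are imaginary; in the second case
  \<open>-i\<close> times the polynomial would be real with leading coefficient \<open>-i\<close>.\<close>

lemma real_poly_if_real_square_values:
  fixes Q :: "'a::real_closed_field alg_closure poly"
  assumes "lead_coeff Q = 1" "infinite S" "\<And>x. x \<in> S \<Longrightarrow> poly Q (to_ac x) ^ 2 \<in> range to_ac"
  shows "\<exists>Q'. Q = map_poly to_ac Q'"
proof -
  define S1 where "S1 = {x\<in>S. poly Q (to_ac x) \<in> range to_ac}"
  define S2 where "S2 = {x\<in>S. \<exists>t. poly Q (to_ac x) = i_ac * to_ac t}"
  have "S \<subseteq> S1 \<union> S2"
  proof
    fix x assume "x \<in> S"
    then obtain a where "poly Q (to_ac x) * poly Q (to_ac x) = to_ac a"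
      using assms(3) by (metis power2_eq_square rangeE)
    then show "x \<in> S1 \<union> S2"
      by (rule square_eq_real_cases) (use \<open>x \<in> S\<close> in \<open>auto simp: S1_def S2_def\<close>)
  qed
  then have "infinite S1 \<or> infinite S2"
    using \<open>infinite S\<close> by (meson finite_UnI finite_subset)
  then show ?thesis
  proof
    assume "infinite S1"
    then show ?thesis by (rule real_poly_if_real_values) (simp add: S1_def)
  next
    assume "infinite S2"
    moreover have "poly (smult (- i_ac) Q) (to_ac x) \<in> range to_ac" if "x \<in> S2" for x
    proof -
      obtain t where "poly Q (to_ac x) = i_ac * to_ac t" using \<open>x \<in> S2\<close> unfolding S2_def by auto
      then have "poly (smult (- i_ac) Q) (to_ac x) = to_ac t"
        by (simp add: mult.assoc[symmetric] i_ac_squared)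
      then show ?thesis by simp
    qed
    ultimately obtain Q' where Q': "smult (- i_ac) Q = map_poly to_ac Q'"
      using real_poly_if_real_values by blast
    have "- i_ac = to_ac (lead_coeff Q')"
      using arg_cong[OF Q', of lead_coeff] assms(1) by (simp add: coeff_map_poly i_ac_neq_0)
    then have "i_ac = to_ac (- lead_coeff Q')" by (metis minus_minus to_ac_minus)
    then show ?thesis using i_ac_not_real by blast
  qed
qed

lemma alg_closure_factorization:
  fixes p :: "'a::field poly"
  assumes "p \<noteq> 0"
  obtains r where "map_poly to_ac p = smult (to_ac (lead_coeff p)) (\<Prod>j<degree p. [:- r j, 1:])"
proof -
  obtain A where A: "size A = degree p"
    "map_poly to_ac p = smult (to_ac (lead_coeff p)) (\<Prod>x\<in>#A. [:-x, 1:])"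
    using alg_closed_imp_factorization[of "map_poly to_ac p"] assms by (auto simp: coeff_map_poly)
  obtain rs where rs: "mset rs = A" using ex_mset by blast
  have "(\<Prod>x\<in>#A. [:-x, 1:]) = prod_list (map (\<lambda>x. [:-x, 1:]) rs)"
    by (simp flip: rs mset_map add: prod_mset_prod_list)
  also have "\<dots> = (\<Prod>j<degree p. [:- rs ! j, 1:])"
    using A(1) by (simp flip: rs add: prod.list_conv_set_nth atLeast0LessThan)
  finally show ?thesis using A(2) that[of "\<lambda>j. rs ! j"] by simp
qed

lemma prod_diff_swap:
  fixes r s :: "nat \<Rightarrow> 'a::comm_ring_1"
  shows "(\<Prod>k<m. \<Prod>j<n. s k - r j) = (-1) ^ (n * m) * (\<Prod>j<n. \<Prod>k<m. r j - s k)"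
proof -
  have "(\<Prod>j<n. s k - r j) = (-1) ^ n * (\<Prod>j<n. r j - s k)" for k
    by (induction n) (simp_all add: algebra_simps)
  then have "(\<Prod>k<m. \<Prod>j<n. s k - r j) = (-1) ^ (n * m) * (\<Prod>k<m. \<Prod>j<n. r j - s k)"
    by (simp add: prod.distrib power_mult)
  also have "(\<Prod>k<m. \<Prod>j<n. r j - s k) = (\<Prod>j<n. \<Prod>k<m. r j - s k)"
    by (rule prod.swap)
  finally show ?thesis .
qed

lemma poly_map_poly_to_ac_mod:
  assumes "poly (map_poly to_ac q) z = 0"
  shows "poly (map_poly to_ac (p mod q)) z = poly (map_poly to_ac (p :: 'a::field poly)) z"
proof -
  have "map_poly to_ac p = map_poly to_ac (p div q) * map_poly to_ac q + map_poly to_ac (p mod q)"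
    by (metis div_mult_mod_eq map_poly_to_ac_add map_poly_to_ac_mult)
  then show ?thesis using assms by simp
qed

text \<open>The product of \<open>G\<close> over the roots of \<open>p\<close> is, up to a unit, the resultant of \<open>p\<close> and
  \<open>G\<close>; replacing \<open>G\<close> by \<open>G mod p\<close> and exchanging the roles of the two polynomials reduces
  the degree of \<open>p\<close>.\<close>

lemma prod_poly_at_roots_real:
  fixes p G :: "'a::field poly"
  assumes "p \<noteq> 0" "map_poly to_ac p = smult (to_ac (lead_coeff p)) (\<Prod>j<degree p. [:- r j, 1:])"
  shows "(\<Prod>j<degree p. poly (map_poly to_ac G) (r j)) \<in> range to_ac"
  using assms
proof (induction "degree p" arbitrary: p G r rule: less_induct)
  case less
  define n where "n = degree p"
  define G' where "G' = G mod p"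
  have p: "poly (map_poly to_ac p) z = to_ac (lead_coeff p) * (\<Prod>j<n. z - r j)" for z
    unfolding n_def by (subst less.prems(2)) (simp add: poly_prod)
  have G_at_r: "poly (map_poly to_ac G) (r j) = poly (map_poly to_ac G') (r j)" if "j < n" for j
    unfolding G'_def using that
    by (intro poly_map_poly_to_ac_mod[symmetric]) (force simp: p prod_zero_iff)
  have prod_G: "(\<Prod>j<n. poly (map_poly to_ac G) (r j)) = (\<Prod>j<n. poly (map_poly to_ac G') (r j))"
    by (rule prod.cong) (simp_all add: G_at_r)
  show ?case
  proof (cases "G' = 0")
    case True
    have "(\<Prod>j<n. poly (map_poly to_ac G') (r j)) = to_ac (0 ^ n)"
      unfolding True by simp
    then show ?thesis unfolding n_def[symmetric] prod_G by (metis rangeI)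
  next
    case False
    define m where "m = degree G'"
    have "degree G' < degree p"
      using degree_mod_less'[OF less.prems(1) False[unfolded G'_def]] unfolding G'_def .
    obtain s where s: "map_poly to_ac G' = smult (to_ac (lead_coeff G')) (\<Prod>k<m. [:- s k, 1:])"
      unfolding m_def by (rule alg_closure_factorization[OF False])
    have IH: "(\<Prod>k<m. poly (map_poly to_ac p) (s k)) \<in> range to_ac"
      unfolding m_def by (rule less.hyps[OF \<open>degree G' < degree p\<close> False s[unfolded m_def]])
    define Res where "Res = (\<Prod>j<n. \<Prod>k<m. r j - s k)"
    define \<kappa> where "\<kappa> = lead_coeff p ^ m * (-1) ^ (n * m)"
    have "\<kappa> \<noteq> 0" using less.prems(1) by (simp add: \<kappa>_def)
    have "(\<Prod>k<m. poly (map_poly to_ac p) (s k)) = to_ac (lead_coeff p) ^ m * (\<Prod>k<m. \<Prod>j<n. s k - r j)"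
      unfolding p by (simp add: prod.distrib)
    also have "\<dots> = to_ac \<kappa> * Res"
      unfolding Res_def \<kappa>_def by (subst prod_diff_swap) (simp add: mult.assoc)
    finally have "Res = to_ac (y / \<kappa>)" if "(\<Prod>k<m. poly (map_poly to_ac p) (s k)) = to_ac y" for y
      using that \<open>\<kappa> \<noteq> 0\<close> by (simp add: field_simps)
    then obtain y where "Res = to_ac y" using IH by blast
    moreover have "(\<Prod>j<n. poly (map_poly to_ac G') (r j)) = to_ac (lead_coeff G') ^ n * Res"
      unfolding Res_def s by (simp add: poly_prod prod.distrib)
    ultimately have "(\<Prod>j<n. poly (map_poly to_ac G') (r j)) = to_ac (lead_coeff G' ^ n * y)"
      by simp
    then show ?thesis unfolding n_def[symmetric] prod_G by (metis rangeI)
  qed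
qed

definition index_pairs :: "nat \<Rightarrow> (nat \<times> nat) set" where
  "index_pairs n = {(i, j). i < j \<and> j < n}"

lemma index_pairs_Suc: "index_pairs (Suc n) = index_pairs n \<union> (\<lambda>i. (i, n)) ` {..<n}"
  unfolding index_pairs_def by auto

lemma finite_index_pairs [simp]: "finite (index_pairs n)"
  by (rule finite_subset[of _ "{..<n} \<times> {..<n}"]) (auto simp: index_pairs_def)

lemma card_index_pairs: "2 * card (index_pairs n) = n * (n - 1)"
proof (induction n)
  case (Suc n)
  have "card (index_pairs (Suc n)) = card (index_pairs n) + card ((\<lambda>i. (i, n)) ` {..<n})"
    unfolding index_pairs_Suc
    by (rule card_Un_disjoint) (use finite_index_pairs[of n] in \<open>auto simp: index_pairs_def\<close>)
  also have "card ((\<lambda>i. (i, n)) ` {..<n}) = n"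
    by (subst card_image) (auto simp: inj_on_def)
  finally show ?case using Suc by (cases n) (auto simp: algebra_simps)
qed (simp add: index_pairs_def)

lemma prod_index_pairs_Suc:
  "(\<Prod>(i, j)\<in>index_pairs (Suc n). g i j) = (\<Prod>(i, j)\<in>index_pairs n. g i j) * (\<Prod>i<n. g i n)"
proof -
  have "(\<Prod>(i, j)\<in>index_pairs (Suc n). g i j)
      = (\<Prod>(i, j)\<in>index_pairs n. g i j) * (\<Prod>(i, j)\<in>(\<lambda>i. (i, n)) ` {..<n}. g i j)"
    unfolding index_pairs_Suc
    by (rule prod.union_disjoint) (use finite_index_pairs[of n] in \<open>auto simp: index_pairs_def\<close>)
  also have "(\<Prod>(i, j)\<in>(\<lambda>i. (i, n)) ` {..<n}. g i j) = (\<Prod>i<n. g i n)"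
    by (subst prod.reindex) (auto simp: inj_on_def)
  finally show ?thesis .
qed

lemma prod_symmetric_square:
  fixes g :: "nat \<Rightarrow> nat \<Rightarrow> 'b::comm_monoid_mult"
  assumes "\<And>i j. g i j = g j i"
  shows "(\<Prod>i<n. \<Prod>j<n. g i j) = (\<Prod>i<n. g i i) * (\<Prod>(i, j)\<in>index_pairs n. g i j) ^ 2"
proof (induction n)
  case (Suc n)
  have "(\<Prod>j<n. g n j) = (\<Prod>j<n. g j n)" using assms by simp
  then have "(\<Prod>i<Suc n. \<Prod>j<Suc n. g i j)
      = (\<Prod>i<n. \<Prod>j<n. g i j) * (\<Prod>i<n. g i n) * (\<Prod>i<n. g i n) * g n n"
    by (simp add: prod.distrib mult_ac)
  then show ?case
    unfolding Suc prod_index_pairs_Suc by (simp add: power2_eq_square mult_ac)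
qed (simp add: index_pairs_def)

lemma infinite_nonroots_to_ac:
  fixes D :: "'a::field_char_0 alg_closure poly"
  assumes "D \<noteq> 0"
  shows "infinite {x::'a. poly D (to_ac x) \<noteq> 0}"
proof -
  have "finite (to_ac -` {z. poly D z = 0})"
    by (rule finite_vimageI) (use poly_roots_finite[OF assms] inj_to_ac in auto)
  then have "finite {x::'a. poly D (to_ac x) = 0}" by (simp add: vimage_def)
  then show ?thesis
    using infinite_UNIV_char_0
    by (metis (mono_tags) Collect_neg_eq Diff_infinite_finite Compl_eq_Diff_UNIV)
qed

text \<open>The following two lemmas replace the theorem on symmetric functions in Laplace's proof:
  with \<open>h i j = r i + r j + c r i r j\<close>, the product of \<open>x - h i j\<close> over all \<open>i, j\<close> is
  the product over the roots of \<open>p\<close> of a polynomial with real coefficients.\<close>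

lemma prod_pair_values_real:
  fixes p :: "'a::real_closed_field poly"
  assumes "p \<noteq> 0"
    and p: "map_poly to_ac p = smult (to_ac (lead_coeff p)) (\<Prod>j<degree p. [:- r j, 1:])"
  shows "(\<Prod>i<degree p. \<Prod>j<degree p. to_ac x - (r i + r j + to_ac c * r i * r j)) \<in> range to_ac"
proof -
  define n where "n = degree p"
  define G where "G = (\<Prod>j<n. [:to_ac x - r j, - (1 + to_ac c * r j):])"
  have poly_G: "poly G Y = (\<Prod>j<n. to_ac x - r j - (1 + to_ac c * r j) * Y)" for Y
    unfolding G_def poly_prod by (intro prod.cong) (auto simp: algebra_simps)
  have "poly G (to_ac y) \<in> range to_ac" for y
  proof -
    have G_y: "poly G (to_ac y) = (\<Prod>j<n. to_ac (x - y) - to_ac (1 + c * y) * r j)"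
      unfolding poly_G by (simp add: algebra_simps)
    show ?thesis
    proof (cases "1 + c * y = 0")
      case True
      then have "poly G (to_ac y) = to_ac ((x - y) ^ n)" unfolding G_y by simp
      then show ?thesis by (metis rangeI)
    next
      case False
      define t where "t = (x - y) / (1 + c * y)"
      have t: "x - y = (1 + c * y) * t" using False by (simp add: t_def)
      have factor:
        "to_ac (x - y) - to_ac (1 + c * y) * r j = to_ac (1 + c * y) * (to_ac t - r j)" for j
        by (simp only: t right_diff_distrib to_ac_mult)
      have "(\<Prod>j<n. to_ac t - r j) = poly (map_poly to_ac p) (to_ac t) / to_ac (lead_coeff p)"
        using \<open>p \<noteq> 0\<close> unfolding n_def by (subst p) (simp add: poly_prod)
      then have "poly G (to_ac y) = to_ac (1 + c * y) ^ n * to_ac (poly p t / lead_coeff p)"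
        unfolding G_y factor
        by (simp only: prod.distrib prod_constant card_lessThan poly_map_poly_to_ac to_ac_divide)
      then show ?thesis by (metis rangeI to_ac_mult to_ac_power)
    qed
  qed
  then obtain G' where "G = map_poly to_ac G'"
    using real_poly_if_real_values[of "UNIV :: 'a set" G] infinite_UNIV_char_0 by blast
  then have "(\<Prod>i<n. poly G (r i)) \<in> range to_ac"
    using prod_poly_at_roots_real[OF assms] unfolding n_def by simp
  also have "(\<Prod>i<n. poly G (r i)) = (\<Prod>i<n. \<Prod>j<n. to_ac x - (r i + r j + to_ac c * r i * r j))"
    unfolding poly_G by (intro prod.cong refl) (simp add: algebra_simps)
  finally show ?thesis unfolding n_def .
qed

text \<open>Write the product of the previous lemma as \<open>\<Delta>(x) q(x)\<^sup>2\<close>, with \<open>\<Delta>\<close> the diagonal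
  part (real, again a product over the roots) and \<open>q\<close> the monic polynomial with roots
  \<open>h i j\<close>, \<open>i < j\<close>; then \<open>q(x)\<^sup>2\<close> is real wherever \<open>\<Delta>(x) \<noteq> 0\<close>.\<close>

lemma pair_values_poly_real:
  fixes p :: "'a::real_closed_field poly"
  assumes "p \<noteq> 0"
    and p: "map_poly to_ac p = smult (to_ac (lead_coeff p)) (\<Prod>j<degree p. [:- r j, 1:])"
  shows "\<exists>q'. (\<Prod>(i, j)\<in>index_pairs (degree p). [:- (r i + r j + to_ac c * r i * r j), 1:])
    = map_poly to_ac q'"
proof -
  define n where "n = degree p"
  define h where "h i j = r i + r j + to_ac c * r i * r j" for i j
  define q where "q = (\<Prod>(i, j)\<in>index_pairs n. [:- h i j, 1:])"
  define D where "D = (\<Prod>i<n. [:- h i i, 1:])"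
  have Phi: "(\<Prod>i<n. \<Prod>j<n. to_ac x - h i j) = poly D (to_ac x) * poly q (to_ac x) ^ 2" for x
    unfolding D_def q_def poly_prod
    by (subst prod_symmetric_square) (auto simp: h_def algebra_simps case_prod_beta)
  have Phi_real: "(\<Prod>i<n. \<Prod>j<n. to_ac x - h i j) \<in> range to_ac" for x
    using prod_pair_values_real[OF assms, of x c] unfolding h_def n_def .
  have D_real: "poly D (to_ac x) \<in> range to_ac" for x
  proof -
    have "(\<Prod>i<n. poly (map_poly to_ac [:x, -2, -c:]) (r i)) \<in> range to_ac"
      using prod_poly_at_roots_real[OF assms] unfolding n_def .
    also have "(\<Prod>i<n. poly (map_poly to_ac [:x, -2, -c:]) (r i)) = poly D (to_ac x)"
      unfolding D_def h_def poly_prod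
      by (intro prod.cong refl) (simp add: map_poly_pCons algebra_simps)
    finally show ?thesis .
  qed
  have "poly q (to_ac x) ^ 2 \<in> range to_ac" if "poly D (to_ac x) \<noteq> 0" for x
  proof -
    have "poly q (to_ac x) ^ 2 = (\<Prod>i<n. \<Prod>j<n. to_ac x - h i j) / poly D (to_ac x)"
      using Phi[of x] that by simp
    then show ?thesis using Phi_real D_real by (simp add: range_to_ac_divide)
  qed
  moreover have "D \<noteq> 0" unfolding D_def by (simp add: prod_zero_iff)
  moreover have "lead_coeff q = 1" unfolding q_def by (simp add: lead_coeff_prod case_prod_beta)
  ultimately have "\<exists>q'. q = map_poly to_ac q'"
    using real_poly_if_real_square_values infinite_nonroots_to_ac by blast
  then show ?thesis unfolding q_def h_def n_def .
qed

lemma R_i_if_pair_values: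
  fixes c1 c2 :: "'a::real_closed_field"
  assumes "x + y + to_ac c1 * x * y \<in> R_i" "x + y + to_ac c2 * x * y \<in> R_i" "c1 \<noteq> c2"
  shows "x \<in> R_i"
proof -
  have "(x + y + to_ac c1 * x * y) - (x + y + to_ac c2 * x * y) = to_ac (c1 - c2) * (x * y)"
    by (simp add: algebra_simps)
  then have "to_ac (c1 - c2) * (x * y) \<in> R_i" using R_i_diff[OF assms(1,2)] by simp
  then have "to_ac (1 / (c1 - c2)) * (to_ac (c1 - c2) * (x * y)) \<in> R_i" by (rule R_i_scale)
  then have xy: "x * y \<in> R_i" using assms(3) by simp
  have "x + y = (x + y + to_ac c1 * x * y) - to_ac c1 * (x * y)" by (simp add: algebra_simps)
  then have "x + y \<in> R_i" using R_i_diff[OF assms(1) R_i_scale[OF xy, of c1]] by simp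
  then show ?thesis using xy by (rule R_i_if_sum_prod)
qed

text \<open>Laplace's proof, by induction on the 2-adic valuation of the degree: the polynomial with
  roots \<open>r i + r j + c r i r j\<close> (\<open>i < j\<close>) is real of degree \<open>n (n - 1) / 2\<close>, so one of its roots
  lies in \<open>R(i)\<close> for each of the infinitely many \<open>c\<close>; two values of \<open>c\<close> share the pair \<open>i, j\<close>,
  which puts \<open>r i + r j\<close> and \<open>r i r j\<close>, hence \<open>r i\<close>, into \<open>R(i)\<close>.\<close>

lemma real_poly_root_in_R_i_pow2:
  fixes p :: "'a::real_closed_field poly"
  assumes "degree p = 2 ^ k * m" "odd m"
  shows "\<exists>z\<in>R_i. poly (map_poly to_ac p) z = 0"
  using assms
proof (induction k arbitrary: p m)
  case 0
  then obtain x where "poly p x = 0" using odd_degree_poly_has_root by auto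
  then show ?case using to_ac_in_R_i[of x] by force
next
  case (Suc k)
  define n where "n = degree p"
  have "n > 0" using Suc.prems unfolding n_def by (cases m) auto
  then have "p \<noteq> 0" unfolding n_def by auto
  then obtain r where p: "map_poly to_ac p = smult (to_ac (lead_coeff p)) (\<Prod>j<n. [:- r j, 1:])"
    unfolding n_def by (rule alg_closure_factorization)
  define h where "h c i j = r i + r j + to_ac c * r i * r j" for c i j
  have "\<exists>(i, j)\<in>index_pairs n. h (of_nat N) i j \<in> R_i" for N :: nat
  proof -
    obtain q' where q': "(\<Prod>(i, j)\<in>index_pairs n. [:- h (of_nat N) i j, 1:]) = map_poly to_ac q'"
      using pair_values_poly_real[OF \<open>p \<noteq> 0\<close> p[unfolded n_def]] unfolding h_def n_def by blast
    have "degree q' = card (index_pairs n)"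
      using arg_cong[OF q', of degree] by (simp add: degree_prod_eq_sum_degree case_prod_beta)
    moreover have "odd (n - 1)" using Suc.prems(1) \<open>n > 0\<close> unfolding n_def by (cases n) auto
    moreover have "card (index_pairs n) = 2 ^ k * (m * (n - 1))"
      using card_index_pairs[of n] Suc.prems(1) unfolding n_def by simp
    ultimately obtain z where "z \<in> R_i" "poly (map_poly to_ac q') z = 0"
      using Suc.IH[of q' "m * (n - 1)"] Suc.prems(2) by auto
    then show ?thesis
      unfolding q'[symmetric] by (auto simp: poly_prod prod_zero_iff case_prod_beta)
  qed
  then obtain g where g: "\<And>N. g N \<in> index_pairs n \<and> h (of_nat N) (fst (g N)) (snd (g N)) \<in> R_i"
    by (metis case_prod_beta)
  have "\<not> inj g"
    using g finite_index_pairs[of n]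
    by (metis finite_imageD finite_subset image_subsetI infinite_UNIV_nat)
  then obtain N1 N2 where N: "N1 \<noteq> N2" "g N1 = g N2" unfolding inj_def by blast
  define i where "i = fst (g N1)"
  have "r i \<in> R_i"
  proof (rule R_i_if_pair_values)
    show "r i + r (snd (g N1)) + to_ac (of_nat N1) * r i * r (snd (g N1)) \<in> R_i"
      using g[of N1] unfolding h_def i_def by simp
    show "r i + r (snd (g N1)) + to_ac (of_nat N2) * r i * r (snd (g N1)) \<in> R_i"
      using g[of N2] N(2) unfolding h_def i_def by simp
    show "(of_nat N1 :: 'a) \<noteq> of_nat N2" using N(1) by simp
  qed
  moreover have "i < n" using g[of N1] unfolding i_def index_pairs_def by auto
  then have "poly (map_poly to_ac p) (r i) = 0" by (subst p) (auto simp: poly_prod)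
  ultimately show ?case by blast
qed

lemma real_poly_root_in_R_i:
  fixes p :: "'a::real_closed_field poly"
  assumes "0 < degree p"
  obtains z where "z \<in> R_i" "poly (map_poly to_ac p) z = 0"
proof -
  obtain m where "degree p = 2 ^ multiplicity 2 (degree p) * m" "\<not> 2 dvd m"
    using multiplicity_decompose'[of "degree p" 2] assms by auto
  then show ?thesis using real_poly_root_in_R_i_pow2 that by blast
qed

lemma quadratic_dvd_if_nonreal_root:
  fixes p :: "'a::real_closed_field poly"
  assumes "poly (map_poly to_ac p) (to_ac \<alpha> + i_ac * to_ac \<beta>) = 0" "\<beta> \<noteq> 0"
  shows "[:\<alpha> * \<alpha> + \<beta> * \<beta>, -2 * \<alpha>, 1:] dvd p"
proof -
  define q where "q = [:\<alpha> * \<alpha> + \<beta> * \<beta>, -2 * \<alpha>, 1:]"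
  define z where "z = to_ac \<alpha> + i_ac * to_ac \<beta>"
  have "poly (map_poly to_ac q) z = to_ac \<beta> * to_ac \<beta> + (i_ac * i_ac) * (to_ac \<beta> * to_ac \<beta>)"
    unfolding q_def z_def by (simp add: map_poly_pCons algebra_simps)
  then have q_z: "poly (map_poly to_ac q) z = 0" by (simp add: i_ac_squared)
  define s where "s = p mod q"
  have s_z: "poly (map_poly to_ac s) z = 0"
    using assms(1) poly_map_poly_to_ac_mod[OF q_z] unfolding s_def z_def by simp
  have "q \<noteq> 0" unfolding q_def by simp
  then have "degree s < 2"
    using degree_mod_less'[of q p] unfolding s_def[symmetric] by (cases "s = 0") (auto simp: q_def)
  then have s: "s = [:coeff s 0, coeff s 1:]"
    by (intro poly_eqI) (auto simp: coeff_pCons coeff_eq_0 split: nat.splits)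
  have "to_ac (coeff s 0 + coeff s 1 * \<alpha>) + i_ac * to_ac (coeff s 1 * \<beta>) = poly (map_poly to_ac s) z"
    unfolding z_def by (subst (2) s) (simp add: map_poly_pCons algebra_simps)
  then have "to_ac (coeff s 0 + coeff s 1 * \<alpha>) + i_ac * to_ac (coeff s 1 * \<beta>) = to_ac 0"
    unfolding s_z by simp
  then have "coeff s 1 * \<beta> = 0" "coeff s 0 + coeff s 1 * \<alpha> = 0"
    by (rule real_plus_i_ac_times_real_eq_real)+
  then have "coeff s 1 = 0" "coeff s 0 = 0" using assms(2) by auto
  then have "s = 0" by (subst s) simp
  then show ?thesis unfolding s_def q_def by (simp add: mod_eq_0_iff_dvd)
qed

lemma rcf_poly_root_or_quadratic_factor:
  fixes p :: "'a::real_closed_field poly"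
  assumes "0 < degree p"
  obtains x where "poly p x = 0"
    | q where "q dvd p" "degree q = 2" "\<And>x. 0 < poly q x"
proof -
  obtain z where "z \<in> R_i" "poly (map_poly to_ac p) z = 0"
    using real_poly_root_in_R_i[OF assms] by blast
  then obtain \<alpha> \<beta> where z: "poly (map_poly to_ac p) (to_ac \<alpha> + i_ac * to_ac \<beta>) = 0"
    by (metis R_iE)
  show ?thesis
  proof (cases "\<beta> = 0")
    case True
    then show ?thesis using z that(1)[of \<alpha>] by simp
  next
    case False
    have "0 < poly [:\<alpha> * \<alpha> + \<beta> * \<beta>, -2 * \<alpha>, 1:] x" for x
    proof -
      have "poly [:\<alpha> * \<alpha> + \<beta> * \<beta>, -2 * \<alpha>, 1:] x = (x - \<alpha>) * (x - \<alpha>) + \<beta> * \<beta>"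
        by (simp add: algebra_simps)
      moreover have "0 < \<beta> * \<beta>" using False by (simp add: not_square_less_zero less_le)
      ultimately show ?thesis by (metis add_nonneg_pos zero_le_square)
    qed
    then show ?thesis
      using that(2) quadratic_dvd_if_nonreal_root[OF z False] by simp
  qed
qed

text \<open>Split off a factor without sign change on \<open>[a, b]\<close> and induct on the degree.\<close>

lemma rcf_poly_IVT:
  fixes p :: "'a::real_closed_field poly"
  assumes "a \<le> b" "poly p a * poly p b \<le> 0"
  shows "\<exists>x. a \<le> x \<and> x \<le> b \<and> poly p x = 0"
  using assms(2)
proof (induction "degree p" arbitrary: p rule: less_induct)
  case less
  show ?case
  proof (cases "poly p a * poly p b = 0")
    case True
    then show ?thesis using assms(1) by auto
  next
    case False
    then have neg: "poly p a * poly p b < 0" using less.prems by (metis less_le)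
    have "0 < degree p"
      using neg by (metis degree_eq_zeroE gr0I not_square_less_zero poly_const_conv)
    have split: "\<exists>x. a \<le> x \<and> x \<le> b \<and> poly p x = 0"
      if "p = f * s" "0 < degree f" "0 < poly f a * poly f b" for f s
    proof -
      have "s \<noteq> 0" "f \<noteq> 0" using neg that(1) by auto
      then have "degree s < degree p" using that(1,2) by (simp add: degree_mult_eq)
      moreover have "poly p a * poly p b = (poly f a * poly f b) * (poly s a * poly s b)"
        using that(1) by (simp add: mult_ac)
      then have "poly s a * poly s b \<le> 0"
        using neg mult_pos_pos[OF that(3), of "poly s a * poly s b"] by linarith
      ultimately show ?thesis using less.hyps that(1) by fastforce
    qed
    show ?thesis
      using \<open>0 < degree p\<close>
    proof (cases rule: rcf_poly_root_or_quadratic_factor)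
      case (1 \<alpha>)
      then obtain s where ps: "p = [:-\<alpha>, 1:] * s" by (metis dvdE poly_eq_0_iff_dvd)
      show ?thesis
      proof (cases "a \<le> \<alpha> \<and> \<alpha> \<le> b")
        case True
        then show ?thesis using 1 by blast
      next
        case False
        then have "0 < (a - \<alpha>) * (b - \<alpha>)"
          using assms(1) by (auto simp: zero_less_mult_iff)
        then show ?thesis using split[OF ps] by simp
      qed
    next
      case (2 q)
      then obtain s where "p = q * s" by (elim dvdE)
      then show ?thesis using split 2 by simp
    qed
  qed
qed

section \<open>Signs near a point\<close>

definition cof_value :: "'a::field poly \<Rightarrow> 'a \<Rightarrow> 'a" where
  "cof_value P x = poly (cof P x) x"

text \<open>\<open>side_sgn 1 P x\<close> and \<open>side_sgn (-1) P x\<close> are the signs of \<open>P\<close> immediately to the right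
  and to the left of \<open>x\<close> (see \<open>sgn_poly_right\<close>, \<open>sgn_poly_left\<close>); both are \<open>0\<close> for \<open>P = 0\<close>.\<close>

definition side_sgn :: "'a::linordered_field \<Rightarrow> 'a poly \<Rightarrow> 'a \<Rightarrow> 'a" where
  "side_sgn e P x = e ^ order x P * sgn (cof_value P x)"

lemma cof_eqI:
  fixes P C :: "'a::field poly"
  assumes "P = [:-x, 1:] ^ m * C" "poly C x \<noteq> 0"
  shows "order x P = m" "cof P x = C" "cof_value P x = poly C x" "P \<noteq> 0"
proof -
  have "C \<noteq> 0" using assms(2) by auto
  then show "P \<noteq> 0" using assms(1) by simp
  then show order: "order x P = m"
    using assms by (simp add: order_mult order_power_n_n order_0I)
  show "cof P x = C" unfolding cof_def order using assms(1) by simp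
  then show "cof_value P x = poly C x" unfolding cof_value_def by simp
qed

lemma cof_decomp:
  fixes P :: "'a::field poly"
  assumes "P \<noteq> 0"
  shows "P = [:-x, 1:] ^ order x P * cof P x" "cof_value P x \<noteq> 0"
proof -
  obtain C where C: "P = [:-x, 1:] ^ order x P * C" "\<not> [:-x, 1:] dvd C"
    using order_decomp[OF assms] by blast
  then have "poly C x \<noteq> 0" by (simp add: poly_eq_0_iff_dvd)
  then show "P = [:-x, 1:] ^ order x P * cof P x" "cof_value P x \<noteq> 0"
    using cof_eqI[OF C(1)] C(1) by simp_all
qed

lemma side_sgn_0 [simp]: "side_sgn e 0 x = 0"
  by (simp add: side_sgn_def cof_value_def cof_def)

lemma side_sgn_unit:
  assumes "e = 1 \<or> e = -1" "F \<noteq> 0"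
  shows "side_sgn e F x = 1 \<or> side_sgn e F x = -1"
  using assms cof_decomp(2)[OF assms(2), of x]
  by (cases "even (order x F)") (auto simp: side_sgn_def sgn_if)

lemma side_sgn_square:
  assumes "e = 1 \<or> e = -1" "F \<noteq> 0"
  shows "side_sgn e F x * side_sgn e F x = 1"
  using side_sgn_unit[OF assms, of x] by auto

lemma side_sgn_minus_one: "side_sgn (-1) F x = (-1) ^ order x F * side_sgn 1 F x"
  by (simp add: side_sgn_def)

lemma cof_value_mult:
  assumes "P \<noteq> 0" "Q \<noteq> 0"
  shows "cof_value (P * Q) x = cof_value P x * cof_value Q x"
proof -
  have "P * Q = [:-x, 1:] ^ (order x P + order x Q) * (cof P x * cof Q x)"
    by (subst (1) cof_decomp(1)[OF assms(1), of x], subst (1) cof_decomp(1)[OF assms(2), of x])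
       (simp add: power_add mult_ac)
  moreover have "poly (cof P x * cof Q x) x \<noteq> 0"
    using cof_decomp(2)[OF assms(1)] cof_decomp(2)[OF assms(2)] by (simp add: cof_value_def)
  ultimately have "cof_value (P * Q) x = poly (cof P x * cof Q x) x" by (rule cof_eqI(3))
  then show ?thesis by (simp add: cof_value_def)
qed

lemma side_sgn_mult:
  assumes "F \<noteq> 0" "G \<noteq> 0"
  shows "side_sgn e (F * G) x = side_sgn e F x * side_sgn e G x"
  using assms by (simp add: side_sgn_def cof_value_mult order_mult power_add sgn_mult mult_ac)

lemma cof_value_uminus: "cof_value (- P) x = - cof_value P x"
  by (simp add: cof_value_def cof_def)

lemma side_sgn_uminus: "side_sgn e (- F) x = - side_sgn e F x"
  by (simp add: side_sgn_def cof_value_uminus order_uminus)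

lemma order_cof_value_add_less:
  fixes F G :: "'a::field poly"
  assumes "F \<noteq> 0" "G \<noteq> 0" "order x F < order x G"
  shows "F + G \<noteq> 0" "order x (F + G) = order x F" "cof_value (F + G) x = cof_value F x"
proof -
  define m where "m = order x F"
  define k where "k = order x G - order x F"
  have "F + G = [:-x, 1:] ^ m * (cof F x + [:-x, 1:] ^ k * cof G x)"
    by (subst (1) cof_decomp(1)[OF assms(1), of x], subst (1) cof_decomp(1)[OF assms(2), of x])
       (use assms(3) in \<open>simp add: m_def k_def power_add[symmetric] algebra_simps\<close>)
  moreover have "poly (cof F x + [:-x, 1:] ^ k * cof G x) x = cof_value F x"
    using assms(3) by (simp add: k_def cof_value_def)
  moreover have "cof_value F x \<noteq> 0" using cof_decomp(2)[OF assms(1)] .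
  ultimately show "order x (F + G) = order x F" "cof_value (F + G) x = cof_value F x" "F + G \<noteq> 0"
    using cof_eqI[of "F + G" x m] by (auto simp: m_def)
qed

lemma side_sgn_add_less:
  assumes "F \<noteq> 0" "G \<noteq> 0" "order x F < order x G"
  shows "side_sgn e (F + G) x = side_sgn e F x"
  using order_cof_value_add_less[OF assms] by (simp add: side_sgn_def)

lemma order_cof_value_add_eq:
  fixes F G :: "'a::field poly"
  assumes "F \<noteq> 0" "G \<noteq> 0" "order x F = order x G" "cof_value F x + cof_value G x \<noteq> 0"
  shows "F + G \<noteq> 0" "order x (F + G) = order x F"
    "cof_value (F + G) x = cof_value F x + cof_value G x"
proof -
  have "F + G = [:-x, 1:] ^ order x F * (cof F x + cof G x)"
    by (subst (1) cof_decomp(1)[OF assms(1), of x], subst (1) cof_decomp(1)[OF assms(2), of x])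
       (simp add: assms(3) algebra_simps)
  moreover have "poly (cof F x + cof G x) x = cof_value F x + cof_value G x"
    by (simp add: cof_value_def)
  ultimately show "order x (F + G) = order x F" "cof_value (F + G) x = cof_value F x + cof_value G x"
    "F + G \<noteq> 0"
    using cof_eqI[of "F + G" x "order x F"] assms(4) by auto
qed

lemma order_add_ge:
  fixes F G :: "'a::field poly"
  assumes "F + G \<noteq> 0" "m \<le> order x F" "m \<le> order x G"
  shows "m \<le> order x (F + G)"
proof -
  have "[:-x, 1:] ^ m dvd F" "[:-x, 1:] ^ m dvd G" using assms(2,3) by (auto simp: order_divides)
  then have "[:-x, 1:] ^ m dvd F + G" by simp
  then show ?thesis using assms(1) by (simp add: order_divides)
qed

lemma order_add_gt_if_cancel:
  fixes F G :: "'a::field poly"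
  assumes "F \<noteq> 0" "G \<noteq> 0" "order x F = order x G" "cof_value F x + cof_value G x = 0"
    and "F + G \<noteq> 0"
  shows "order x F < order x (F + G)"
proof -
  have FG: "F + G = [:-x, 1:] ^ order x F * (cof F x + cof G x)"
    by (subst (1) cof_decomp(1)[OF assms(1), of x], subst (1) cof_decomp(1)[OF assms(2), of x])
       (simp add: assms(3) algebra_simps)
  have "poly (cof F x + cof G x) x = 0" using assms(4) by (simp add: cof_value_def)
  then obtain C where "cof F x + cof G x = [:-x, 1:] * C" by (metis dvdE poly_eq_0_iff_dvd)
  then have "F + G = [:-x, 1:] ^ Suc (order x F) * C" unfolding FG by (simp only: power_Suc mult_ac)
  then have "[:-x, 1:] ^ Suc (order x F) dvd F + G" by simp
  then show ?thesis using assms(5) order_divides Suc_le_eq by blast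
qed

lemma sgn_poly_eq_if_no_root:
  fixes C :: "'a::real_closed_field poly"
  assumes "x \<le> y" "\<And>z. x \<le> z \<Longrightarrow> z \<le> y \<Longrightarrow> poly C z \<noteq> 0"
  shows "sgn (poly C x) = sgn (poly C y)"
proof (rule ccontr)
  assume "sgn (poly C x) \<noteq> sgn (poly C y)"
  moreover have "poly C x \<noteq> 0" "poly C y \<noteq> 0" using assms by auto
  ultimately have "poly C x * poly C y \<le> 0"
    by (auto simp: sgn_if mult_le_0_iff split: if_splits)
  then show False using rcf_poly_IVT[OF assms(1)] assms(2) by blast
qed

lemma sgn_poly_right:
  fixes P :: "'a::real_closed_field poly"
  assumes "P \<noteq> 0" "x < y" "\<And>z. x < z \<Longrightarrow> z \<le> y \<Longrightarrow> poly P z \<noteq> 0"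
  shows "sgn (poly P y) = side_sgn 1 P x"
proof -
  have P: "P = [:-x, 1:] ^ order x P * cof P x" and "cof_value P x \<noteq> 0"
    using cof_decomp[OF assms(1)] by auto
  then have "poly (cof P x) z \<noteq> 0" if "x \<le> z" "z \<le> y" for z
    using assms(3)[of z] that
    by (cases "z = x") (auto simp: cof_value_def, metis poly_mult mult_zero_right)
  then have "sgn (poly (cof P x) x) = sgn (poly (cof P x) y)"
    using assms(2) by (intro sgn_poly_eq_if_no_root) auto
  moreover have "sgn (poly P y) = sgn ((y - x) ^ order x P) * sgn (poly (cof P x) y)"
    by (subst P) (simp add: sgn_mult)
  ultimately show ?thesis
    using assms(2) by (simp add: side_sgn_def cof_value_def power_sgn)
qed

lemma sgn_poly_left:
  fixes P :: "'a::real_closed_field poly"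
  assumes "P \<noteq> 0" "y < x" "\<And>z. y \<le> z \<Longrightarrow> z < x \<Longrightarrow> poly P z \<noteq> 0"
  shows "sgn (poly P y) = side_sgn (-1) P x"
proof -
  have P: "P = [:-x, 1:] ^ order x P * cof P x" and "cof_value P x \<noteq> 0"
    using cof_decomp[OF assms(1)] by auto
  then have "poly (cof P x) z \<noteq> 0" if "y \<le> z" "z \<le> x" for z
    using assms(3)[of z] that
    by (cases "z = x") (auto simp: cof_value_def, metis poly_mult mult_zero_right)
  then have "sgn (poly (cof P x) y) = sgn (poly (cof P x) x)"
    using assms(2) by (intro sgn_poly_eq_if_no_root) auto
  moreover have "sgn (poly P y) = sgn ((y - x) ^ order x P) * sgn (poly (cof P x) y)"
    by (subst P) (simp add: sgn_mult)
  ultimately show ?thesis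
    using assms(2) by (simp add: side_sgn_def cof_value_def power_sgn)
qed

lemma side_sgn_eq_if_no_root_between:
  fixes W :: "'a::real_closed_field poly"
  assumes "a < b" "\<And>z. a < z \<Longrightarrow> z < b \<Longrightarrow> poly W z \<noteq> 0"
  shows "side_sgn 1 W a = side_sgn (-1) W b"
proof (cases "W = 0")
  case False
  define m where "m = (a + b) / 2"
  have m: "a < m" "m < b" using assms(1) by (auto simp: m_def field_simps)
  have "sgn (poly W m) = side_sgn 1 W a"
    using sgn_poly_right[OF False m(1)] assms(2) m by auto
  moreover have "sgn (poly W m) = side_sgn (-1) W b"
    using sgn_poly_left[OF False m(2)] assms(2) m by auto
  ultimately show ?thesis by simp
qed simp

lemma sum_side_sgn_jumps:
  fixes W :: "'a::real_closed_field poly"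
  assumes "finite Z" "Z \<subseteq> {a<..<b}" "a < b"
    and "\<And>x. W \<noteq> 0 \<Longrightarrow> a < x \<Longrightarrow> x < b \<Longrightarrow> poly W x = 0 \<Longrightarrow> x \<in> Z"
  shows "(\<Sum>x\<in>Z. side_sgn 1 W x - side_sgn (-1) W x) = side_sgn (-1) W b - side_sgn 1 W a"
proof (cases "W = 0")
  case False
  with assms show ?thesis
  proof (induction Z arbitrary: b rule: finite_linorder_max_induct)
    case empty
    then have "side_sgn 1 W a = side_sgn (-1) W b" by (intro side_sgn_eq_if_no_root_between) auto
    then show ?case by simp
  next
    case (insert c Z)
    have "a < c" "c < b" using insert.prems(1) by auto
    have "(\<Sum>x\<in>Z. side_sgn 1 W x - side_sgn (-1) W x) = side_sgn (-1) W c - side_sgn 1 W a"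
      using insert.IH[of c] insert.hyps(2) insert.prems \<open>a < c\<close> by fastforce
    moreover have "side_sgn 1 W c = side_sgn (-1) W b"
      using side_sgn_eq_if_no_root_between[OF \<open>c < b\<close>] insert.hyps(2) insert.prems(3,4) \<open>a < c\<close>
      by (metis insertE less_asym less_trans)
    moreover have "c \<notin> Z" using insert.hyps(2) by blast
    ultimately show ?case using insert.hyps(1) by simp
  qed
qed simp

section \<open>The local identity\<close>

definition side_ind :: "'a::linordered_field \<Rightarrow> 'a poly \<Rightarrow> 'a poly \<Rightarrow> 'a \<Rightarrow> 'a" where
  "side_ind e P Q x =
    (if P \<noteq> 0 \<and> Q \<noteq> 0 \<and> order x P < order x Q then side_sgn e P x * side_sgn e Q x / 2 else 0)"

text \<open>The sign of \<open>B/D\<close> on one side of \<open>x\<close>, provided \<open>B/D\<close> tends to \<open>0\<close> or to \<open>\<infinity>\<close> at \<open>x\<close>.\<close>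

definition side_sgn_singular :: "'a::linordered_field \<Rightarrow> 'a poly \<Rightarrow> 'a poly \<Rightarrow> 'a \<Rightarrow> 'a" where
  "side_sgn_singular e B D x =
    (if B \<noteq> 0 \<and> D \<noteq> 0 \<and> order x B \<noteq> order x D then side_sgn e B x * side_sgn e D x else 0)"

lemma side_ind_0 [simp]: "side_ind e 0 Q x = 0" "side_ind e P 0 x = 0"
  by (simp_all add: side_ind_def)

lemma side_sgn_singular_0 [simp]: "side_sgn_singular e 0 D x = 0" "side_sgn_singular e B 0 x = 0"
  by (simp_all add: side_sgn_singular_def)

lemma Ind_plus_eq_side_ind: "Ind_plus P Q x = side_ind 1 P Q x"
  by (auto simp: Ind_plus_def side_ind_def val_def side_sgn_def cof_value_def sgn_mult)

lemma minus_one_power_int_diff: "(-1 :: 'a::field) powi (int m - int n) = (-1) ^ m * (-1) ^ n"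
proof -
  have "(-1 :: 'a) powi (int m - int n) = (-1) ^ m / (-1) ^ n"
    by (simp add: power_int_diff power_int_of_nat)
  then show ?thesis by (cases "even n") auto
qed

lemma Ind_minus_eq_side_ind: "Ind_minus P Q x = side_ind (-1) P Q x"
  by (auto simp: Ind_minus_def side_ind_def val_def side_sgn_def cof_value_def sgn_mult
      minus_one_power_int_diff mult_ac)

lemma Ind_at_eq_side_ind: "Ind_at P Q x = side_ind 1 P Q x - side_ind (-1) P Q x"
  by (simp add: Ind_at_def Ind_plus_eq_side_ind Ind_minus_eq_side_ind)

lemma Sign_eq_side_sgn:
  assumes "e = 1 \<or> e = -1"
  shows "Sign P Q x =
    (if P \<noteq> 0 \<and> Q \<noteq> 0 \<and> order x P = order x Q then side_sgn e P x * side_sgn e Q x else 0)"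
proof -
  have "e ^ order x P * e ^ order x P = 1" using assms by (auto simp flip: power_add)
  then show ?thesis
    by (auto simp: Sign_def val_def side_sgn_def cof_value_def sgn_mult mult_ac)
qed

lemma side_sgn_singular_eq:
  assumes "e = 1 \<or> e = -1"
  shows "side_sgn_singular e B D x = side_sgn e (B * D) x - Sign B D x"
  using Sign_eq_side_sgn[OF assms] by (auto simp: side_sgn_singular_def side_sgn_mult)

lemma sign_units_opposite:
  fixes a b c d :: "'a::comm_ring_1"
  assumes "a = 1 \<or> a = -1" "b = 1 \<or> b = -1" "c = 1 \<or> c = -1" "d = 1 \<or> d = -1"
    and "b * c = - (a * d)"
  shows "a * b + c * d = 0" "a * c + b * d = 0"
  using assms by (elim disjE; simp)+

lemma sign_units_equal:
  fixes a b c d :: "'a::comm_ring_1"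
  assumes "a = 1 \<or> a = -1" "b = 1 \<or> b = -1" "c = 1 \<or> c = -1" "d = 1 \<or> d = -1"
    and "b * c = a * d"
  shows "a * d * (a * c + b * d) = a * b + c * d"
  using assms by (elim disjE; simp)

lemma sgn_add_if_sgn_eq:
  fixes u v :: "'a::linordered_idom"
  assumes "sgn u = sgn v"
  shows "sgn (u + v) = sgn u"
  using assms by (auto simp: sgn_if split: if_splits)

lemma sgn_diff_if_cross_sum_zero:
  fixes p q r s :: "'a::linordered_field"
  assumes "q \<noteq> 0" "s \<noteq> 0" "p * s + q * r = 0"
  shows "sgn (p * r - q * s) = - sgn (q * s)"
proof -
  have "(q * s) * (p * r) = (q * r) * (p * s)" by (simp add: mult_ac)
  also have "\<dots> = - ((q * r) * (q * r))"
    using assms(3) by (simp add: eq_neg_iff_add_eq_0[symmetric] add.commute)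
  finally have "(q * s) * (p * r - q * s) = - ((q * q) * (r * r + s * s))"
    by (simp add: algebra_simps)
  moreover have "0 < q * q" "0 < s * s" using assms(1,2) by (simp_all add: less_le)
  then have "0 < (q * q) * (r * r + s * s)" by (simp add: add_nonneg_pos)
  ultimately have "sgn (q * s) * sgn (p * r - q * s) = -1"
    by (simp flip: sgn_mult)
  then show ?thesis
    using assms(1,2) by (auto simp: sgn_if split: if_splits)
qed

text \<open>The local identity of the theorem, on the side \<open>e\<close> of \<open>x\<close>, in the form
  \<open>2 Ind(A, B) + \<sigma>(B/D) = 2 Ind(P, Q) + 2 Ind(R, S)\<close>; first for nonzero \<open>P, Q, R, S\<close>, by cases
  on the orders of \<open>P/Q\<close> and \<open>R/S\<close> at \<open>x\<close>.\<close>

context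
  fixes P Q R S :: "'a::linordered_field poly" and x e :: 'a
  assumes nonzero: "P \<noteq> 0" "Q \<noteq> 0" "R \<noteq> 0" "S \<noteq> 0" and unit: "e = 1 \<or> e = -1"
begin

lemma cross_products_order_side_sgn:
  "order x (P * R) = order x P + order x R" "order x (Q * S) = order x Q + order x S"
  "order x (P * S) = order x P + order x S" "order x (Q * R) = order x Q + order x R"
  "side_sgn e (P * R) x = side_sgn e P x * side_sgn e R x"
  "side_sgn e (Q * S) x = side_sgn e Q x * side_sgn e S x"
  "side_sgn e (P * S) x = side_sgn e P x * side_sgn e S x"
  "side_sgn e (Q * R) x = side_sgn e Q x * side_sgn e R x"
  "P * R \<noteq> 0" "Q * S \<noteq> 0" "P * S \<noteq> 0" "Q * R \<noteq> 0"
  using nonzero by (simp_all add: order_mult side_sgn_mult)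

lemma side_sgn_squares:
  "side_sgn e P x * side_sgn e P x = 1" "side_sgn e Q x * side_sgn e Q x = 1"
  "side_sgn e R x * side_sgn e R x = 1" "side_sgn e S x * side_sgn e S x = 1"
  using side_sgn_square[OF unit] nonzero by auto

lemma local_identity_val_less:
  assumes less: "order x P + order x S < order x Q + order x R"
  shows "2 * side_ind e (P * R - Q * S) (P * S + Q * R) x
      + side_sgn_singular e (P * S + Q * R) (Q * S) x = 2 * side_ind e P Q x + 2 * side_ind e R S x"
proof -
  let ?mP = "order x P" and ?mQ = "order x Q" and ?mR = "order x R" and ?mS = "order x S"
  let ?a = "side_sgn e P x" and ?b = "side_sgn e Q x"
    and ?c = "side_sgn e R x" and ?d = "side_sgn e S x"
  note prod = cross_products_order_side_sgn and units = side_sgn_squares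
  have B: "P * S + Q * R \<noteq> 0" "order x (P * S + Q * R) = ?mP + ?mS"
    "side_sgn e (P * S + Q * R) x = ?a * ?d"
    using order_cof_value_add_less[of "P * S" "Q * R" x] side_sgn_add_less[of "P * S" "Q * R" x e]
      less prod by auto
  have K: "side_sgn_singular e (P * S + Q * R) (Q * S) x = (if ?mP \<noteq> ?mQ then ?a * ?b else 0)"
    using B prod units by (auto simp: side_sgn_singular_def mult_ac)
  consider (PR) "?mP + ?mR < ?mQ + ?mS" | (QS) "?mQ + ?mS < ?mP + ?mR" | (eq) "?mP + ?mR = ?mQ + ?mS"
    by linarith
  then show ?thesis
  proof cases
    case PR
    have "P * R - Q * S \<noteq> 0" "order x (P * R - Q * S) = ?mP + ?mR"
      "side_sgn e (P * R - Q * S) x = ?a * ?c"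
      using order_cof_value_add_less[of "P * R" "- (Q * S)" x]
        side_sgn_add_less[of "P * R" "- (Q * S)" x e] PR prod by auto
    then have "2 * side_ind e (P * R - Q * S) (P * S + Q * R) x
        = (if ?mR < ?mS then ?c * ?d else 0)"
      using B units(1) by (simp add: side_ind_def mult_ac)
    moreover have "?mP < ?mQ" using PR less by linarith
    ultimately show ?thesis using K nonzero by (simp add: side_ind_def)
  next
    case QS
    have "P * R - Q * S \<noteq> 0" "order x (P * R - Q * S) = ?mQ + ?mS"
      "side_sgn e (P * R - Q * S) x = - (?b * ?d)"
      using order_cof_value_add_less[of "- (Q * S)" "P * R" x]
        side_sgn_add_less[of "- (Q * S)" "P * R" x e] QS prod by (auto simp: side_sgn_uminus)
    then have "2 * side_ind e (P * R - Q * S) (P * S + Q * R) x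
        = (if ?mQ < ?mP then - (?a * ?b) else 0)"
      using B units(4) by (simp add: side_ind_def mult_ac)
    moreover have "\<not> ?mR < ?mS" using QS less by linarith
    ultimately show ?thesis using K nonzero by (auto simp: side_ind_def)
  next
    case eq
    have "side_ind e (P * R - Q * S) (P * S + Q * R) x = 0"
    proof (cases "P * R - Q * S = 0")
      case False
      then have "?mP + ?mR \<le> order x (P * R - Q * S)"
        using order_add_ge[of "P * R" "- (Q * S)" "?mP + ?mR" x] eq prod by simp
      then show ?thesis using B eq less by (simp add: side_ind_def)
    qed (simp add: side_ind_def)
    then show ?thesis using K eq less nonzero by (simp add: side_ind_def)
  qed
qed

lemma double_side_ind_sum:
  "2 * side_ind e P Q x + 2 * side_ind e R S x
    = (if order x P < order x Q then side_sgn e P x * side_sgn e Q x else 0)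
      + (if order x R < order x S then side_sgn e R x * side_sgn e S x else 0)"
  using nonzero by (simp add: side_ind_def)

lemma local_identity_lhs_eq_0:
  assumes "P * S + Q * R \<noteq> 0 \<Longrightarrow> P * R - Q * S \<noteq> 0
    \<and> order x (P * R - Q * S) < order x (P * S + Q * R)
    \<and> order x (P * S + Q * R) \<noteq> order x (Q * S)
    \<and> side_sgn e (P * R - Q * S) x = - (side_sgn e Q x * side_sgn e S x)"
  shows "2 * side_ind e (P * R - Q * S) (P * S + Q * R) x
      + side_sgn_singular e (P * S + Q * R) (Q * S) x = 0"
proof (cases "P * S + Q * R = 0")
  case False
  then show ?thesis
    using assms cross_products_order_side_sgn nonzero
    by (simp add: side_ind_def side_sgn_singular_def)
qed (simp add: side_ind_def side_sgn_singular_def)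

lemma cross_sum_order_side_sgn:
  assumes eq: "order x P + order x S = order x Q + order x R"
  defines "w \<equiv> cof_value P x * cof_value S x + cof_value Q x * cof_value R x"
  shows "w \<noteq> 0 \<Longrightarrow> P * S + Q * R \<noteq> 0 \<and> order x (P * S + Q * R) = order x P + order x S
      \<and> (side_sgn e Q x * side_sgn e R x = side_sgn e P x * side_sgn e S x
          \<longrightarrow> side_sgn e (P * S + Q * R) x = side_sgn e P x * side_sgn e S x)"
    and "w = 0 \<Longrightarrow> (P * S + Q * R = 0 \<or> order x P + order x S < order x (P * S + Q * R))
      \<and> side_sgn e Q x * side_sgn e R x = - (side_sgn e P x * side_sgn e S x)"
proof -
  note prod = cross_products_order_side_sgn
  have cof_PS: "cof_value (P * S) x = cof_value P x * cof_value S x"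
    and cof_QR: "cof_value (Q * R) x = cof_value Q x * cof_value R x"
    using nonzero by (simp_all add: cof_value_mult)
  have "e \<noteq> 0" using unit by auto
  have PS: "side_sgn e P x * side_sgn e S x
      = e ^ (order x P + order x S) * sgn (cof_value (P * S) x)"
    and QR: "side_sgn e Q x * side_sgn e R x
      = e ^ (order x P + order x S) * sgn (cof_value (Q * R) x)"
    using prod unfolding eq by (simp_all add: side_sgn_def)
  show "w \<noteq> 0 \<Longrightarrow> P * S + Q * R \<noteq> 0 \<and> order x (P * S + Q * R) = order x P + order x S
      \<and> (side_sgn e Q x * side_sgn e R x = side_sgn e P x * side_sgn e S x
          \<longrightarrow> side_sgn e (P * S + Q * R) x = side_sgn e P x * side_sgn e S x)"
  proof -
    assume "w \<noteq> 0"
    then have B: "P * S + Q * R \<noteq> 0" "order x (P * S + Q * R) = order x P + order x S"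
      "cof_value (P * S + Q * R) x = w"
      using order_cof_value_add_eq[of "P * S" "Q * R" x] prod eq cof_PS cof_QR
      by (auto simp: w_def)
    moreover have "side_sgn e (P * S + Q * R) x = side_sgn e P x * side_sgn e S x"
      if "side_sgn e Q x * side_sgn e R x = side_sgn e P x * side_sgn e S x"
    proof -
      have "sgn (cof_value (Q * R) x) = sgn (cof_value (P * S) x)"
        using that PS QR \<open>e \<noteq> 0\<close> by simp
      then have "sgn w = sgn (cof_value (P * S) x)"
        unfolding w_def cof_PS cof_QR by (metis sgn_add_if_sgn_eq)
      then show ?thesis using B PS by (simp add: side_sgn_def)
    qed
    ultimately show ?thesis by blast
  qed
  show "w = 0 \<Longrightarrow> (P * S + Q * R = 0 \<or> order x P + order x S < order x (P * S + Q * R))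
      \<and> side_sgn e Q x * side_sgn e R x = - (side_sgn e P x * side_sgn e S x)"
  proof -
    assume "w = 0"
    then have "cof_value (Q * R) x = - cof_value (P * S) x"
      unfolding w_def cof_PS cof_QR by (simp add: eq_neg_iff_add_eq_0 add.commute)
    then have "side_sgn e Q x * side_sgn e R x = - (side_sgn e P x * side_sgn e S x)"
      using PS QR by (simp add: sgn_minus)
    moreover have "P * S + Q * R = 0 \<or> order x P + order x S < order x (P * S + Q * R)"
      using order_add_gt_if_cancel[of "P * S" "Q * R" x] prod eq cof_PS cof_QR \<open>w = 0\<close>
      by (auto simp: w_def)
    ultimately show ?thesis by blast
  qed
qed

lemma side_sgn_units:
  "side_sgn e P x = 1 \<or> side_sgn e P x = -1" "side_sgn e Q x = 1 \<or> side_sgn e Q x = -1"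
  "side_sgn e R x = 1 \<or> side_sgn e R x = -1" "side_sgn e S x = 1 \<or> side_sgn e S x = -1"
  using side_sgn_unit[OF unit] nonzero by blast+

lemma local_identity_val_eq_pole:
  assumes eq: "order x P + order x S = order x Q + order x R" and pole: "order x P < order x Q"
    and not_bad: "\<not> bad_number P Q R S x"
  shows "2 * side_ind e (P * R - Q * S) (P * S + Q * R) x
      + side_sgn_singular e (P * S + Q * R) (Q * S) x = 2 * side_ind e P Q x + 2 * side_ind e R S x"
proof -
  let ?mP = "order x P" and ?mQ = "order x Q" and ?mR = "order x R" and ?mS = "order x S"
  let ?a = "side_sgn e P x" and ?b = "side_sgn e Q x"
    and ?c = "side_sgn e R x" and ?d = "side_sgn e S x"
  let ?A = "P * R - Q * S" and ?B = "P * S + Q * R"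
  let ?w = "cof_value P x * cof_value S x + cof_value Q x * cof_value R x"
  note prod = cross_products_order_side_sgn and signs = side_sgn_units
  have A: "?A \<noteq> 0" "order x ?A = ?mP + ?mR" "side_sgn e ?A x = ?a * ?c"
    using order_cof_value_add_less[of "P * R" "- (Q * S)" x]
      side_sgn_add_less[of "P * R" "- (Q * S)" x e] pole eq prod by auto
  have rhs: "2 * side_ind e P Q x + 2 * side_ind e R S x = ?a * ?b + ?c * ?d"
    using double_side_ind_sum pole eq by simp
  show ?thesis
  proof (cases "?w = 0")
    case False
    then have B: "?B \<noteq> 0" "order x ?B = ?mP + ?mS"
      "?b * ?c = ?a * ?d \<Longrightarrow> side_sgn e ?B x = ?a * ?d"
      using cross_sum_order_side_sgn(1)[OF eq] by blast+
    have "2 * side_ind e ?A ?B x + side_sgn_singular e ?B (Q * S) x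
        = side_sgn e ?B x * (?a * ?c + ?b * ?d)"
      using A B pole eq prod by (simp add: side_ind_def side_sgn_singular_def algebra_simps)
    also have "\<dots> = ?a * ?b + ?c * ?d"
    proof -
      have "?b * ?c = ?a * ?d \<or> ?b * ?c = - (?a * ?d)" using signs by (elim disjE) auto
      then show ?thesis using sign_units_equal[OF signs] sign_units_opposite[OF signs] B(3) by auto
    qed
    finally show ?thesis unfolding rhs .
  next
    case True
    then have bc: "?b * ?c = - (?a * ?d)" and B: "?B = 0 \<or> ?mP + ?mS < order x ?B"
      using cross_sum_order_side_sgn(2)[OF eq] by blast+
    have "?a * ?b + ?c * ?d = 0" "?a * ?c = - (?b * ?d)"
      using sign_units_opposite[OF signs bc] by (simp_all add: eq_neg_iff_add_eq_0)
    moreover have "order x ?B \<noteq> order x (Q * S)" if "?B \<noteq> 0"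
      using not_bad that nonzero pole eq prod by (auto simp: bad_number_def val_def)
    ultimately have "2 * side_ind e ?A ?B x + side_sgn_singular e ?B (Q * S) x = 0"
      using A B pole eq by (intro local_identity_lhs_eq_0) auto
    then show ?thesis using rhs \<open>?a * ?b + ?c * ?d = 0\<close> by simp
  qed
qed

lemma local_identity_val_eq_finite:
  assumes eq: "order x P + order x S = order x Q + order x R" and finite: "order x P = order x Q"
  shows "2 * side_ind e (P * R - Q * S) (P * S + Q * R) x
      + side_sgn_singular e (P * S + Q * R) (Q * S) x = 2 * side_ind e P Q x + 2 * side_ind e R S x"
proof -
  let ?mP = "order x P" and ?mQ = "order x Q" and ?mR = "order x R" and ?mS = "order x S"
  let ?A = "P * R - Q * S" and ?B = "P * S + Q * R"
  let ?w = "cof_value P x * cof_value S x + cof_value Q x * cof_value R x"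
  note prod = cross_products_order_side_sgn
  have "?mR = ?mS" using eq finite by simp
  then have rhs: "2 * side_ind e P Q x + 2 * side_ind e R S x = 0"
    using double_side_ind_sum finite by simp
  show ?thesis
  proof (cases "?w = 0")
    case False
    then have B: "?B \<noteq> 0" "order x ?B = ?mP + ?mS" using cross_sum_order_side_sgn(1)[OF eq] by blast+
    have "side_ind e ?A ?B x = 0"
    proof (cases "?A = 0")
      case False
      then have "?mP + ?mR \<le> order x ?A"
        using order_add_ge[of "P * R" "- (Q * S)" "?mP + ?mR" x] finite \<open>?mR = ?mS\<close> prod by simp
      then show ?thesis using B \<open>?mR = ?mS\<close> by (simp add: side_ind_def)
    qed (simp add: side_ind_def)
    then show ?thesis
      using B finite prod rhs by (simp add: side_sgn_singular_def)
  next
    case True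
    have cof_Q: "cof_value Q x \<noteq> 0" and cof_S: "cof_value S x \<noteq> 0"
      using cof_decomp(2) nonzero by blast+
    have "sgn (cof_value P x * cof_value R x - cof_value Q x * cof_value S x)
        = - sgn (cof_value Q x * cof_value S x)"
      using sgn_diff_if_cross_sum_zero[OF cof_Q cof_S] True by (simp add: algebra_simps)
    then have "cof_value (P * R) x + cof_value (- (Q * S)) x \<noteq> 0"
      "sgn (cof_value (P * R) x + cof_value (- (Q * S)) x) = - sgn (cof_value (Q * S) x)"
      using nonzero cof_Q cof_S by (auto simp: cof_value_mult cof_value_uminus sgn_mult sgn_eq_0_iff)
    then have A: "?A \<noteq> 0" "order x ?A = ?mQ + ?mS"
      "side_sgn e ?A x = - (side_sgn e Q x * side_sgn e S x)"
      using order_cof_value_add_eq[of "P * R" "- (Q * S)" x] finite \<open>?mR = ?mS\<close> prod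
      by (auto simp: side_sgn_def)
    have "?B = 0 \<or> ?mP + ?mS < order x ?B" using cross_sum_order_side_sgn(2)[OF eq True] by blast
    then have "2 * side_ind e ?A ?B x + side_sgn_singular e ?B (Q * S) x = 0"
      using A finite prod by (intro local_identity_lhs_eq_0) auto
    then show ?thesis using rhs by simp
  qed
qed

lemma local_identity_val_eq_zero:
  assumes eq: "order x P + order x S = order x Q + order x R" and zero: "order x Q < order x P"
  shows "2 * side_ind e (P * R - Q * S) (P * S + Q * R) x
      + side_sgn_singular e (P * S + Q * R) (Q * S) x = 2 * side_ind e P Q x + 2 * side_ind e R S x"
proof -
  let ?A = "P * R - Q * S" and ?B = "P * S + Q * R"
  note prod = cross_products_order_side_sgn
  have rhs: "2 * side_ind e P Q x + 2 * side_ind e R S x = 0"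
    using double_side_ind_sum zero eq by simp
  have A: "?A \<noteq> 0" "order x ?A = order x Q + order x S"
    "side_sgn e ?A x = - (side_sgn e Q x * side_sgn e S x)"
    using order_cof_value_add_less[of "- (Q * S)" "P * R" x]
      side_sgn_add_less[of "- (Q * S)" "P * R" x e] zero eq prod by (auto simp: side_sgn_uminus)
  have "order x Q + order x S < order x ?B" if "?B \<noteq> 0"
    using order_add_ge[OF that, of "order x P + order x S" x] zero eq prod by simp
  then have "2 * side_ind e ?A ?B x + side_sgn_singular e ?B (Q * S) x = 0"
    using A prod by (intro local_identity_lhs_eq_0) auto
  then show ?thesis using rhs by simp
qed
end

lemma side_ind_mult_left:
  assumes "F \<noteq> 0" "e = 1 \<or> e = -1"
  shows "side_ind e (F * P) (F * Q) x = side_ind e P Q x"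
proof (cases "P = 0 \<or> Q = 0")
  case False
  have "side_sgn e (F * P) x * side_sgn e (F * Q) x
      = (side_sgn e F x * side_sgn e F x) * (side_sgn e P x * side_sgn e Q x)"
    using assms(1) False by (simp add: side_sgn_mult mult_ac)
  then show ?thesis
    using assms False side_sgn_square[OF assms(2,1)] by (simp add: side_ind_def order_mult)
qed (auto simp: side_ind_def)

lemma local_identity_first_zero:
  fixes Q R S :: "'a::linordered_field poly"
  assumes "Q \<noteq> 0" "R \<noteq> 0" "S \<noteq> 0" "e = 1 \<or> e = -1"
  shows "2 * side_ind e (- (Q * S)) (Q * R) x + side_sgn_singular e (Q * R) (Q * S) x
    = 2 * side_ind e R S x"
proof -
  have "side_sgn e Q x * side_sgn e Q x = 1" using side_sgn_square[OF assms(4,1)] .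
  then have "side_sgn e (- (Q * S)) x * side_sgn e (Q * R) x = - (side_sgn e R x * side_sgn e S x)"
    "side_sgn e (Q * R) x * side_sgn e (Q * S) x = side_sgn e R x * side_sgn e S x"
    using assms by (simp_all add: side_sgn_uminus side_sgn_mult algebra_simps)
  then show ?thesis
    using assms by (auto simp: side_ind_def side_sgn_singular_def order_mult)
qed

lemma bad_number_swap: "bad_number R S P Q x = bad_number P Q R S x"
  unfolding bad_number_def by (auto simp: mult_ac add_ac)

lemma local_identity_nonzero:
  fixes P Q R S :: "'a::linordered_field poly"
  assumes "P \<noteq> 0" "Q \<noteq> 0" "R \<noteq> 0" "S \<noteq> 0" "e = 1 \<or> e = -1" "\<not> bad_number P Q R S x"
  shows "2 * side_ind e (P * R - Q * S) (P * S + Q * R) x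
      + side_sgn_singular e (P * S + Q * R) (Q * S) x = 2 * side_ind e P Q x + 2 * side_ind e R S x"
proof -
  consider "order x P + order x S < order x Q + order x R"
    | "order x P + order x S = order x Q + order x R"
    | "order x R + order x Q < order x S + order x P"
    by linarith
  then show ?thesis
  proof cases
    case 3
    have "\<not> bad_number R S P Q x" using assms(6) bad_number_swap by metis
    then show ?thesis
      using local_identity_val_less[OF assms(3,4,1,2,5) 3] by (simp add: mult.commute add.commute)
  next
    case 2
    then show ?thesis
      using local_identity_val_eq_pole[OF assms(1-5) 2] local_identity_val_eq_finite[OF assms(1-5) 2]
        local_identity_val_eq_zero[OF assms(1-5) 2] assms(6)
      by (metis linorder_neqE_nat)
  qed (rule local_identity_val_less[OF assms(1-5)])
qed

lemma local_identity:
  fixes P Q R S :: "'a::linordered_field poly"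
  assumes "P \<noteq> 0 \<or> Q \<noteq> 0" "R \<noteq> 0 \<or> S \<noteq> 0" "e = 1 \<or> e = -1" "\<not> bad_number P Q R S x"
  shows "2 * side_ind e (P * R - Q * S) (P * S + Q * R) x
      + side_sgn_singular e (P * S + Q * R) (Q * S) x = 2 * side_ind e P Q x + 2 * side_ind e R S x"
proof -
  consider "Q = 0" | "S = 0" | "P = 0 \<or> R = 0" "Q \<noteq> 0" "S \<noteq> 0"
    | "P \<noteq> 0" "Q \<noteq> 0" "R \<noteq> 0" "S \<noteq> 0"
    by blast
  then show ?thesis
  proof cases
    case 1
    then show ?thesis using assms(1,3) side_ind_mult_left[of P e R S x] by simp
  next
    case 2
    then show ?thesis using assms(2,3) side_ind_mult_left[of R e P Q x] by (simp add: mult.commute)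
  next
    case 3
    consider "P = 0" "R = 0" | "P = 0" "R \<noteq> 0" | "P \<noteq> 0" "R = 0" using 3(1) by blast
    then show ?thesis
    proof cases
      case 2
      then show ?thesis using local_identity_first_zero[of Q R S e x] 3 assms(3) by simp
    next
      case 3
      then show ?thesis
        using local_identity_first_zero[of S P Q e x] \<open>Q \<noteq> 0\<close> \<open>S \<noteq> 0\<close> assms(3)
        by (simp add: mult.commute)
    qed simp
  qed (rule local_identity_nonzero; use assms in simp)
qed

lemma local_identity_at_bad:
  fixes P Q R S :: "'a::linordered_field poly"
  assumes bad: "bad_number P Q R S x" and unit: "e = 1 \<or> e = -1"
  shows "2 * side_ind e (P * R - Q * S) (P * S + Q * R) x - 2 * side_ind e P Q x
      - 2 * side_ind e R S x = side_sgn e (P * R - Q * S) x * side_sgn e (P * S + Q * R) x"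
    and "side_sgn_singular e (P * S + Q * R) (Q * S) x = 0"
    and "even (order x (P * R - Q * S) + order x (P * S + Q * R))"
proof -
  let ?mP = "order x P" and ?mQ = "order x Q" and ?mR = "order x R" and ?mS = "order x S"
  let ?a = "side_sgn e P x" and ?b = "side_sgn e Q x"
    and ?c = "side_sgn e R x" and ?d = "side_sgn e S x"
  let ?A = "P * R - Q * S" and ?B = "P * S + Q * R"
  have nonzero: "P \<noteq> 0" "Q \<noteq> 0" "R \<noteq> 0" "S \<noteq> 0" "?B \<noteq> 0"
    using bad by (auto simp: bad_number_def)
  note prod = cross_products_order_side_sgn[OF nonzero(1-4) unit]
  have vals: "?mP + ?mS = ?mQ + ?mR" "?mP < ?mQ" "?mR < ?mS" "order x ?B = ?mQ + ?mS"
    using bad prod by (auto simp: bad_number_def val_def)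
  have A: "?A \<noteq> 0" "order x ?A = ?mP + ?mR"
    using order_cof_value_add_less[of "P * R" "- (Q * S)" x] vals prod by auto
  have "cof_value P x * cof_value S x + cof_value Q x * cof_value R x = 0"
  proof (rule ccontr)
    assume "cof_value P x * cof_value S x + cof_value Q x * cof_value R x \<noteq> 0"
    then have "order x ?B = ?mP + ?mS"
      using cross_sum_order_side_sgn(1)[OF nonzero(1-4) unit vals(1)] by blast
    then show False using vals by simp
  qed
  then have "?b * ?c = - (?a * ?d)"
    using cross_sum_order_side_sgn(2)[OF nonzero(1-4) unit vals(1)] by blast
  then have "?a * ?b + ?c * ?d = 0"
    by (rule sign_units_opposite(1)[OF side_sgn_units[OF nonzero(1-4) unit]])
  moreover have "2 * side_ind e ?A ?B x = side_sgn e ?A x * side_sgn e ?B x"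
    using A vals nonzero by (simp add: side_ind_def)
  moreover have "2 * side_ind e P Q x + 2 * side_ind e R S x = ?a * ?b + ?c * ?d"
    using double_side_ind_sum[OF nonzero(1-4) unit] vals by simp
  ultimately show "2 * side_ind e ?A ?B x - 2 * side_ind e P Q x - 2 * side_ind e R S x
      = side_sgn e ?A x * side_sgn e ?B x"
    by (simp add: algebra_simps)
  show "side_sgn_singular e ?B (Q * S) x = 0"
    using vals prod by (simp add: side_sgn_singular_def)
  have "order x ?A + order x ?B = 2 * (?mQ + ?mR)" using A vals by simp
  then show "even (order x ?A + order x ?B)" by simp
qed

text \<open>Since the bad numbers are excluded only at the endpoints, the interior points need the
  difference of the two one-sided identities, which also holds at bad numbers.\<close>

lemma Ind_at_product:
  fixes P Q R S :: "'a::linordered_field poly"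
  assumes "P \<noteq> 0 \<or> Q \<noteq> 0" "R \<noteq> 0 \<or> S \<noteq> 0"
  defines "W \<equiv> (P * S + Q * R) * (Q * S)"
  shows "Ind_at (P * R - Q * S) (P * S + Q * R) x = Ind_at P Q x + Ind_at R S x
    - (side_sgn 1 W x - side_sgn (-1) W x) / 2"
proof (cases "bad_number P Q R S x")
  case True
  note right = local_identity_at_bad[OF True, of 1]
    and left = local_identity_at_bad[OF True, of "-1"]
  have "side_sgn (-1) (P * R - Q * S) x * side_sgn (-1) (P * S + Q * R) x
      = side_sgn 1 (P * R - Q * S) x * side_sgn 1 (P * S + Q * R) x"
    using right(3) by (simp add: side_sgn_minus_one power_add[symmetric] mult_ac)
  moreover have "side_sgn 1 W x = side_sgn (-1) W x"
    using right(2) left(2) side_sgn_singular_eq[of 1] side_sgn_singular_eq[of "-1"]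
    unfolding W_def by (metis eq_iff_diff_eq_0)
  ultimately show ?thesis
    using right(1) left(1) by (simp add: Ind_at_eq_side_ind field_simps)
next
  case False
  have "2 * side_ind e (P * R - Q * S) (P * S + Q * R) x
      + (side_sgn e W x - Sign (P * S + Q * R) (Q * S) x)
      = 2 * side_ind e P Q x + 2 * side_ind e R S x" if "e = 1 \<or> e = -1" for e
    using local_identity[OF assms(1,2) that False] side_sgn_singular_eq[OF that]
    unfolding W_def by simp
  from this[of 1] this[of "-1"] show ?thesis
    by (simp add: Ind_at_eq_side_ind field_simps)
qed

lemma side_ind_product:
  fixes P Q R S :: "'a::linordered_field poly"
  assumes "P \<noteq> 0 \<or> Q \<noteq> 0" "R \<noteq> 0 \<or> S \<noteq> 0" "e = 1 \<or> e = -1" "\<not> bad_number P Q R S x"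
  shows "side_ind e (P * R - Q * S) (P * S + Q * R) x = side_ind e P Q x + side_ind e R S x
    + (Sign (P * S + Q * R) (Q * S) x - side_sgn e ((P * S + Q * R) * (Q * S)) x) / 2"
  using local_identity[OF assms] side_sgn_singular_eq[OF assms(3)] by (simp add: field_simps)

lemma Ind_at_nonzero_imp_root:
  assumes "Ind_at P Q x \<noteq> 0"
  shows "Q \<noteq> 0" "poly Q x = 0"
proof -
  have "P \<noteq> 0" "Q \<noteq> 0" "order x P < order x Q"
    using assms by (auto simp: Ind_at_eq_side_ind side_ind_def split: if_splits)
  then show "Q \<noteq> 0" "poly Q x = 0" by (auto simp: order_root)
qed

lemma Ind_eq_sum:
  assumes "finite Z" "Z \<subseteq> {a<..<b}"
    and "\<And>x. Q \<noteq> 0 \<Longrightarrow> a < x \<Longrightarrow> x < b \<Longrightarrow> poly Q x = 0 \<Longrightarrow> x \<in> Z"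
  shows "Ind P Q a b = Ind_plus P Q a + (\<Sum>x\<in>Z. Ind_at P Q x) - Ind_minus P Q b"
proof -
  have "{x. a < x \<and> x < b \<and> Ind_at P Q x \<noteq> 0} \<subseteq> Z"
    using assms(3) Ind_at_nonzero_imp_root by blast
  then have "(\<Sum>x\<in>{x. a < x \<and> x < b \<and> Ind_at P Q x \<noteq> 0}. Ind_at P Q x) = (\<Sum>x\<in>Z. Ind_at P Q x)"
    using assms(1,2) by (intro sum.mono_neutral_left) auto
  then show ?thesis unfolding Ind_def by simp
qed

lemma finite_roots_between:
  fixes Fs :: "'a::linordered_idom poly set"
  assumes "finite Fs"
  obtains Z where "finite Z" "Z \<subseteq> {a<..<b}"
    "\<And>F x. F \<in> Fs \<Longrightarrow> F \<noteq> 0 \<Longrightarrow> a < x \<Longrightarrow> x < b \<Longrightarrow> poly F x = 0 \<Longrightarrow> x \<in> Z"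
proof
  let ?Z = "{a<..<b} \<inter> (\<Union>F\<in>Fs - {0}. {x. poly F x = 0})"
  show "finite ?Z" using assms poly_roots_finite by blast
qed auto

theorem proposition2p3:
  fixes P Q R S :: "'a::real_closed_field poly" and a b :: 'a
  assumes "P \<noteq> 0 \<or> Q \<noteq> 0" and "R \<noteq> 0 \<or> S \<noteq> 0" and "a < b"
    and "\<not> bad_number P Q R S a" and "\<not> bad_number P Q R S b"
  shows "Ind (P * R - Q * S) (P * S + Q * R) a b
         = Ind P Q a b + Ind R S a b - Var (P * S + Q * R) (Q * S) a b"
proof -
  define B W where "B = P * S + Q * R" and "W = (P * S + Q * R) * (Q * S)"
  obtain Z where Z: "finite Z" "Z \<subseteq> {a<..<b}"
    "\<And>F x. F \<in> {Q, S, B, W} \<Longrightarrow> F \<noteq> 0 \<Longrightarrow> a < x \<Longrightarrow> x < b \<Longrightarrow> poly F x = 0 \<Longrightarrow> x \<in> Z"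
    by (rule finite_roots_between[of "{Q, S, B, W}"]) auto
  have Ind_sums: "Ind P Q a b = Ind_plus P Q a + (\<Sum>x\<in>Z. Ind_at P Q x) - Ind_minus P Q b"
    "Ind R S a b = Ind_plus R S a + (\<Sum>x\<in>Z. Ind_at R S x) - Ind_minus R S b"
    "Ind (P * R - Q * S) B a b = Ind_plus (P * R - Q * S) B a
      + (\<Sum>x\<in>Z. Ind_at (P * R - Q * S) B x) - Ind_minus (P * R - Q * S) B b"
    using Z by (intro Ind_eq_sum; auto)+
  have "(\<Sum>x\<in>Z. Ind_at (P * R - Q * S) B x)
      = (\<Sum>x\<in>Z. Ind_at P Q x) + (\<Sum>x\<in>Z. Ind_at R S x)
        - (\<Sum>x\<in>Z. side_sgn 1 W x - side_sgn (-1) W x) / 2"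
    using Ind_at_product[OF assms(1,2)] unfolding B_def W_def
    by (simp add: sum.distrib sum_subtractf flip: sum_divide_distrib)
  also have "(\<Sum>x\<in>Z. side_sgn 1 W x - side_sgn (-1) W x) = side_sgn (-1) W b - side_sgn 1 W a"
    using Z assms(3) by (intro sum_side_sgn_jumps) auto
  finally show ?thesis
    using Ind_sums side_ind_product[OF assms(1,2) _ assms(4), of 1]
      side_ind_product[OF assms(1,2) _ assms(5), of "-1"]
    unfolding B_def W_def Ind_plus_eq_side_ind Ind_minus_eq_side_ind Var_def
    by (simp add: field_simps)
qed

end
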